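(* Let $\mathcal{F}=\{(X,\rho_1);f_1,\dots,f_N\}$ and $\mathcal{G}=\{(Y,\rho_2);g_1,\dots,g_N\}$ be IFSs on complete metric spaces with $\rho_1(f_i(x),f_i(x'))=c_i\rho_1(x,x')$ and $\rho_2(g_i(y),g_i(y'))\le r_i\rho_2(y,y')$ for all $x,x'\in X$, $y,y'\in Y$, where $c_i,r_i\in(0,1)$. If $r_i\le c_i$ for all $i$ and $\mathcal{F}$ satisfies the strong open set condition, then $\dim_H G(T_{\mathcal{FG}})=s_0$, where $\sum_{i=1}^Nc_i^{s_0}=1$.
   Context: $X\times Y$ carries the metric $\mathcal{D}((x,y),(x',y'))=\max\{\rho_1(x,x'),\rho_2(y,y')\}$. Attractor $A_\mathcal{F}$: unique nonempty compact $A$ with $A=\bigcup f_i(A)$. Code space $\Omega=\{1,\dots,N\}^{\mathbb{N}}$ ordered lexicographically; address map $\phi_\mathcal{F}(\sigma)=\lim_kf_{\sigma_1}\circ\cdots\circ f_{\sigma_k}(x)$; tops function $\tau_\mathcal{F}(x)=\max\{\sigma:\phi_\mathcal{F}(\sigma)=x\}$; fractal transformation $T_{\mathcal{FG}}=\phi_\mathcal{G}\circ\tau_\mathcal{F}:A_\mathcal{F}\to A_\mathcal{G}$; $G(T_{\mathcal{FG}})=\{(x,T_{\mathcal{FG}}(x)):x\in A_\mathcal{F}\}$. SOSC: a nonempty open $U$ with $f_i(U)\subset U$, $f_i(U)\cap f_j(U)=\emptyset$ for $i\ne j$, $U\cap A_\mathcal{F}\ne\emptyset$. *)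

theory Defs
  imports "HOL-Analysis.Analysis"
begin

definition attractor :: "nat \<Rightarrow> (nat \<Rightarrow> 'a::metric_space \<Rightarrow> 'a) \<Rightarrow> 'a set" where
  "attractor N f = (THE A. compact A \<and> A \<noteq> {} \<and> A = (\<Union>i\<in>{1..N}. f i ` A))"

definition code_space :: "nat \<Rightarrow> (nat \<Rightarrow> nat) set" where
  "code_space N = {\<sigma>. \<forall>k. \<sigma> k \<in> {1..N}}"

text \<open>f_{sigma_1} o ... o f_{sigma_k} (positions counted from 0).\<close>
fun fcomp :: "(nat \<Rightarrow> 'a \<Rightarrow> 'a) \<Rightarrow> (nat \<Rightarrow> nat) \<Rightarrow> nat \<Rightarrow> 'a \<Rightarrow> 'a" where
  "fcomp f \<sigma> 0 = id"
| "fcomp f \<sigma> (Suc k) = fcomp f \<sigma> k \<circ> f (\<sigma> k)"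

text \<open>Address map; the limit is independent of the starting point, we take an
  arbitrary fixed point.\<close>
definition address :: "(nat \<Rightarrow> 'a::metric_space \<Rightarrow> 'a) \<Rightarrow> (nat \<Rightarrow> nat) \<Rightarrow> 'a" where
  "address f \<sigma> = lim (\<lambda>k. fcomp f \<sigma> k undefined)"

definition lex_less :: "(nat \<Rightarrow> nat) \<Rightarrow> (nat \<Rightarrow> nat) \<Rightarrow> bool" where
  "lex_less \<sigma> \<omega> \<longleftrightarrow> (\<exists>k. (\<forall>j<k. \<sigma> j = \<omega> j) \<and> \<sigma> k < \<omega> k)"

definition lex_le :: "(nat \<Rightarrow> nat) \<Rightarrow> (nat \<Rightarrow> nat) \<Rightarrow> bool" where
  "lex_le \<sigma> \<omega> \<longleftrightarrow> \<sigma> = \<omega> \<or> lex_less \<sigma> \<omega>"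

definition tops :: "nat \<Rightarrow> (nat \<Rightarrow> 'a::metric_space \<Rightarrow> 'a) \<Rightarrow> 'a \<Rightarrow> (nat \<Rightarrow> nat)" where
  "tops N f x = (THE \<sigma>. \<sigma> \<in> code_space N \<and> address f \<sigma> = x \<and>
      (\<forall>\<omega>\<in>code_space N. address f \<omega> = x \<longrightarrow> lex_le \<omega> \<sigma>))"

definition fractal_transformation ::
  "nat \<Rightarrow> (nat \<Rightarrow> 'a::metric_space \<Rightarrow> 'a) \<Rightarrow> (nat \<Rightarrow> 'b::metric_space \<Rightarrow> 'b) \<Rightarrow> 'a \<Rightarrow> 'b" where
  "fractal_transformation N f g x = address g (tops N f x)"

definition graph_FT ::
  "nat \<Rightarrow> (nat \<Rightarrow> 'a::metric_space \<Rightarrow> 'a) \<Rightarrow> (nat \<Rightarrow> 'b::metric_space \<Rightarrow> 'b) \<Rightarrow> ('a \<times> 'b) set" where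
  "graph_FT N f g = {(x, fractal_transformation N f g x) | x. x \<in> attractor N f}"

definition SOSC :: "nat \<Rightarrow> (nat \<Rightarrow> 'a::metric_space \<Rightarrow> 'a) \<Rightarrow> bool" where
  "SOSC N f \<longleftrightarrow> (\<exists>U. open U \<and> U \<noteq> {} \<and> (\<forall>i\<in>{1..N}. f i ` U \<subseteq> U) \<and>
      (\<forall>i\<in>{1..N}. \<forall>j\<in>{1..N}. i \<noteq> j \<longrightarrow> f i ` U \<inter> f j ` U = {}) \<and>
      U \<inter> attractor N f \<noteq> {})"

definition diam_wrt :: "('a \<Rightarrow> 'a \<Rightarrow> real) \<Rightarrow> 'a set \<Rightarrow> ennreal" where
  "diam_wrt d U = (SUP x\<in>U. SUP y\<in>U. ennreal (d x y))"

definition diam_pow :: "('a \<Rightarrow> 'a \<Rightarrow> real) \<Rightarrow> real \<Rightarrow> 'a set \<Rightarrow> ennreal" where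
  "diam_pow d s U = (if U = {} then 0 else if s = 0 then 1
      else if diam_wrt d U = \<infinity> then \<infinity> else ennreal (enn2real (diam_wrt d U) powr s))"

definition hausdorff_delta :: "('a \<Rightarrow> 'a \<Rightarrow> real) \<Rightarrow> real \<Rightarrow> real \<Rightarrow> 'a set \<Rightarrow> ennreal" where
  "hausdorff_delta d s \<delta> E = (INF C\<in>{C :: nat \<Rightarrow> 'a set. E \<subseteq> (\<Union>i. C i) \<and>
      (\<forall>i. diam_wrt d (C i) \<le> ennreal \<delta>)}. (\<Sum>i. diam_pow d s (C i)))"

definition hausdorff_outer :: "('a \<Rightarrow> 'a \<Rightarrow> real) \<Rightarrow> real \<Rightarrow> 'a set \<Rightarrow> ennreal" where
  "hausdorff_outer d s E = (SUP \<delta>\<in>{0<..}. hausdorff_delta d s \<delta> E)"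

definition hausdorff_dim :: "('a \<Rightarrow> 'a \<Rightarrow> real) \<Rightarrow> 'a set \<Rightarrow> ereal" where
  "hausdorff_dim d E = Inf {ereal s | s. s \<ge> 0 \<and> hausdorff_outer d s E = 0}"

definition max_dist :: "('a::metric_space \<times> 'b::metric_space) \<Rightarrow> ('a \<times> 'b) \<Rightarrow> real" where
  "max_dist p q = max (dist (fst p) (fst q)) (dist (snd p) (snd q))"

end

theory Submission
  imports Defs
begin

text \<open>Upper bound: at every level \<open>k\<close> the point of the graph over \<open>x\<close> has the top address of
  \<open>x\<close> in both systems, so the graph is covered by the cells \<open>f_u(A_F) \<times> g_u(A_G)\<close>, \<open>|u| = k\<close>,
  of diameter at most \<open>c_u D\<close> since \<open>r_i \<le> c_i\<close>; summing \<open>(c_u D)^s\<close> gives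
  \<open>D^s (\<Sum> c_i^s)^k \<rightarrow> 0\<close> for \<open>s > s0\<close>.
  Lower bound: the projection to the first coordinate does not increase diameters, so it
  suffices to bound \<open>H^s(A_F)\<close> from below for \<open>s < s0\<close>. By the open set condition some word \<open>\<tau>\<close>
  maps \<open>A_F\<close> into the open set, so the maps \<open>f_{u\<tau>}\<close>, \<open>|u| = n\<close>, form a strongly separated
  similarity system on \<open>A_F\<close> with \<open>\<Sum> ratio^s \<ge> 1\<close> for large \<open>n\<close>, and a mass distribution
  argument on the code tree shows that every cover of \<open>A_F\<close> has \<open>\<Sum> diam^s \<ge> \<delta>^s/2\<close>.\<close>

fun word_comp :: "(nat \<Rightarrow> 'a \<Rightarrow> 'a) \<Rightarrow> nat list \<Rightarrow> 'a \<Rightarrow> 'a" where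
  "word_comp \<phi> [] = id"
| "word_comp \<phi> (i # u) = \<phi> i \<circ> word_comp \<phi> u"

lemma word_comp_append: "word_comp \<phi> (u @ v) = word_comp \<phi> u \<circ> word_comp \<phi> v"
  by (induct u) auto

lemma fcomp_eq_word_comp: "fcomp \<phi> \<sigma> k = word_comp \<phi> (map \<sigma> [0..<k])"
  by (induct k) (auto simp: word_comp_append)

lemma map_upt_add: "map \<sigma> [0..<k + m] = map \<sigma> [0..<k] @ map (\<lambda>j. \<sigma> (j + k)) [0..<m]"
  by (induct m) (simp_all add: add.commute)

lemma fcomp_add: "fcomp \<phi> \<sigma> (k + m) = word_comp \<phi> (map \<sigma> [0..<k]) \<circ> fcomp \<phi> (\<lambda>j. \<sigma> (j + k)) m"
  by (simp add: fcomp_eq_word_comp map_upt_add word_comp_append)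

lemma code_space_prefix: "\<sigma> \<in> code_space N \<Longrightarrow> set (map \<sigma> [0..<k]) \<subseteq> {1..N}"
  by (auto simp: code_space_def)

lemma code_space_shift: "\<sigma> \<in> code_space N \<Longrightarrow> (\<lambda>j. \<sigma> (j + k)) \<in> code_space N"
  by (auto simp: code_space_def)

lemma code_space_case_nat: "i \<in> {1..N} \<Longrightarrow> \<omega> \<in> code_space N \<Longrightarrow> case_nat i \<omega> \<in> code_space N"
  by (auto simp: code_space_def split: nat.split)

lemma word_comp_image_subset:
  "set u \<subseteq> I \<Longrightarrow> (\<And>i. i \<in> I \<Longrightarrow> \<phi> i ` S \<subseteq> S) \<Longrightarrow> word_comp \<phi> u ` S \<subseteq> S"
  by (induct u) (auto simp: image_comp[symmetric])

lemma dist_word_comp_le: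
  assumes "\<And>i x y. i \<in> set u \<Longrightarrow> dist (\<phi> i x) (\<phi> i y) \<le> \<rho> i * dist x y"
    and "\<And>i. i \<in> set u \<Longrightarrow> 0 \<le> \<rho> i"
  shows "dist (word_comp \<phi> u x) (word_comp \<phi> u y) \<le> prod_list (map \<rho> u) * dist x y"
  using assms
proof (induct u)
  case (Cons i u)
  have "dist (word_comp \<phi> (i # u) x) (word_comp \<phi> (i # u) y)
      \<le> \<rho> i * dist (word_comp \<phi> u x) (word_comp \<phi> u y)"
    using Cons.prems by simp
  also have "\<dots> \<le> \<rho> i * (prod_list (map \<rho> u) * dist x y)"
    using Cons by (intro mult_left_mono) auto
  finally show ?case by (simp add: mult.assoc)
qed simp

lemma dist_word_comp_eq:
  assumes "\<And>i x y. i \<in> set u \<Longrightarrow> dist (\<phi> i x) (\<phi> i y) = \<rho> i * dist x y"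
  shows "dist (word_comp \<phi> u x) (word_comp \<phi> u y) = prod_list (map \<rho> u) * dist x y"
  using assms by (induct u arbitrary: x y) auto

lemma prod_list_powr:
  fixes \<rho> :: "nat \<Rightarrow> real"
  shows "(\<And>i. i \<in> set u \<Longrightarrow> 0 \<le> \<rho> i) \<Longrightarrow>
    prod_list (map \<rho> u) powr s = prod_list (map (\<lambda>i. \<rho> i powr s) u)"
  by (induct u) (simp_all add: powr_mult prod_list_nonneg)

lemma prod_list_map_mono:
  fixes \<rho> \<rho>' :: "nat \<Rightarrow> real"
  shows "(\<And>i. i \<in> set u \<Longrightarrow> 0 \<le> \<rho> i \<and> \<rho> i \<le> \<rho>' i) \<Longrightarrow> prod_list (map \<rho> u) \<le> prod_list (map \<rho>' u)"
proof (induct u)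
  case (Cons i u)
  then have "prod_list (map \<rho> u) \<le> prod_list (map \<rho>' u)" "0 \<le> \<rho> i" "\<rho> i \<le> \<rho>' i"
    "0 \<le> prod_list (map \<rho> u)"
    by (auto intro!: prod_list_nonneg)
  then show ?case by (simp add: mult_mono)
qed simp

lemma prod_list_le_power:
  fixes \<rho> :: "nat \<Rightarrow> real"
  shows "(\<And>i. i \<in> set u \<Longrightarrow> 0 \<le> \<rho> i \<and> \<rho> i \<le> q) \<Longrightarrow> prod_list (map \<rho> u) \<le> q ^ length u"
  using prod_list_map_mono[of u \<rho> "\<lambda>_. q"] by (simp add: map_replicate_const prod_list_replicate)

lemma sum_prod_list_words:
  fixes \<rho> :: "nat \<Rightarrow> real"
  assumes "finite I"
  shows "(\<Sum>u\<in>{u. set u \<subseteq> I \<and> length u = k}. prod_list (map \<rho> u)) = (\<Sum>i\<in>I. \<rho> i) ^ k"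
proof (induct k)
  case 0
  have "{u. set u \<subseteq> I \<and> length u = 0} = {[]}" by auto
  then show ?case by simp
next
  case (Suc k)
  let ?W = "{u. set u \<subseteq> I \<and> length u = k}"
  have inj: "inj_on (\<lambda>(u, i). i # u) (?W \<times> I)" by (auto simp: inj_on_def)
  have "(\<Sum>u\<in>{u. set u \<subseteq> I \<and> length u = Suc k}. prod_list (map \<rho> u))
      = (\<Sum>(u, i)\<in>?W \<times> I. prod_list (map \<rho> u) * \<rho> i)"
    unfolding lists_length_Suc_eq sum.reindex[OF inj] by (rule sum.cong) auto
  also have "\<dots> = (\<Sum>u\<in>?W. \<Sum>i\<in>I. prod_list (map \<rho> u) * \<rho> i)"
    by (rule sum.cartesian_product[symmetric])
  also have "\<dots> = (\<Sum>u\<in>?W. prod_list (map \<rho> u)) * (\<Sum>i\<in>I. \<rho> i)"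
    by (simp only: sum_distrib_left[symmetric] sum_distrib_right[symmetric])
  finally show ?case using Suc by simp
qed

lemma sum_powr_strict_antimono:
  fixes c :: "'i \<Rightarrow> real"
  assumes "finite I" "I \<noteq> {}" "\<And>i. i \<in> I \<Longrightarrow> 0 < c i \<and> c i < 1" "s < t"
  shows "(\<Sum>i\<in>I. c i powr t) < (\<Sum>i\<in>I. c i powr s)"
  using assms by (intro sum_strict_mono) (auto intro: powr_less_mono')

lemma tendsto_of_dist_le:
  fixes a b :: "nat \<Rightarrow> 'a::metric_space"
  assumes "\<And>k. dist (a k) (b k) \<le> e k" "e \<longlonglongrightarrow> 0" "b \<longlonglongrightarrow> l"
  shows "a \<longlonglongrightarrow> l"
proof -
  have "(\<lambda>k. dist (b k) l) \<longlonglongrightarrow> 0" using assms(3) tendsto_dist_iff by blast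
  from tendsto_add[OF assms(2) this] have lim: "(\<lambda>k. e k + dist (b k) l) \<longlonglongrightarrow> 0" by simp
  have le: "dist (a k) l \<le> e k + dist (b k) l" for k
    using assms(1)[of k] dist_triangle[of "a k" l "b k"] by linarith
  have "(\<lambda>k. dist (a k) l) \<longlonglongrightarrow> 0"
    by (rule tendsto_sandwich[of "\<lambda>_. 0" _ _ "\<lambda>k. e k + dist (b k) l", OF _ _ tendsto_const lim])
      (simp_all add: le)
  then show ?thesis using tendsto_dist_iff by blast
qed

section \<open>Attractors of contractive systems\<close>

locale contractive_ifs =
  fixes N :: nat and \<phi> :: "nat \<Rightarrow> 'a::complete_space \<Rightarrow> 'a" and L :: real
  assumes N_ge_1: "N \<ge> 1" and L_nonneg: "0 \<le> L" and L_less_1: "L < 1"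
    and lipschitz: "\<And>i x y. i \<in> {1..N} \<Longrightarrow> dist (\<phi> i x) (\<phi> i y) \<le> L * dist x y"
begin

definition K :: "'a set" where "K = address \<phi> ` code_space N"

lemma dist_word_comp_le_power:
  "set u \<subseteq> {1..N} \<Longrightarrow> dist (word_comp \<phi> u x) (word_comp \<phi> u y) \<le> L ^ length u * dist x y"
proof -
  assume "set u \<subseteq> {1..N}"
  then have "dist (word_comp \<phi> u x) (word_comp \<phi> u y) \<le> prod_list (map (\<lambda>_. L) u) * dist x y"
    using lipschitz L_nonneg by (intro dist_word_comp_le) auto
  then show ?thesis by (simp add: map_replicate_const prod_list_replicate)
qed

lemma continuous_on_\<phi>: "i \<in> {1..N} \<Longrightarrow> continuous_on S (\<phi> i)"
  using lipschitz L_nonneg by (intro lipschitz_on_continuous_on[of L] lipschitz_onI) auto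

lemma LIMSEQ_power_L: "(\<lambda>k. L ^ k * C) \<longlonglongrightarrow> 0"
  using LIMSEQ_power_zero[of L] L_nonneg L_less_1 tendsto_mult_left_zero by fastforce

lemma ex_power_L_less: "0 < e \<Longrightarrow> \<exists>k. L ^ k * C < e"
  using order_tendstoD(2)[OF LIMSEQ_power_L] eventually_sequentially by (metis order_refl)

text \<open>With \<open>R = max\<^sub>i d(\<phi>\<^sub>i x0, x0) / (1 - L)\<close> one has \<open>max\<^sub>i d(\<phi>\<^sub>i x0, x0) + L R = R\<close>, so every
  \<open>\<phi>\<^sub>i\<close> maps the closed ball of radius \<open>R\<close> about \<open>x0\<close> into itself.\<close>

definition invariant_radius :: "'a \<Rightarrow> real" where
  "invariant_radius x0 = Max ((\<lambda>i. dist (\<phi> i x0) x0) ` {1..N}) / (1 - L)"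

lemma invariant_radius_nonneg: "0 \<le> invariant_radius x0"
proof -
  have "dist (\<phi> 1 x0) x0 \<le> Max ((\<lambda>i. dist (\<phi> i x0) x0) ` {1..N})"
    using N_ge_1 by (intro Max_ge) auto
  then show ?thesis
    using L_less_1 zero_le_dist[of "\<phi> 1 x0" x0] unfolding invariant_radius_def
    by (intro divide_nonneg_pos) linarith+
qed

lemma image_cball_invariant_radius:
  assumes i: "i \<in> {1..N}"
  shows "\<phi> i ` cball x0 (invariant_radius x0) \<subseteq> cball x0 (invariant_radius x0)"
proof safe
  let ?R = "invariant_radius x0"
  fix y assume y: "y \<in> cball x0 ?R"
  have "dist (\<phi> i x0) x0 \<le> Max ((\<lambda>i. dist (\<phi> i x0) x0) ` {1..N})"
    using i by (intro Max_ge) auto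
  then have "dist (\<phi> i x0) x0 \<le> (1 - L) * ?R"
    using L_less_1 by (simp add: invariant_radius_def)
  moreover have "dist (\<phi> i y) (\<phi> i x0) \<le> L * ?R"
    using lipschitz[OF i, of y x0] y L_nonneg mult_left_mono[of "dist y x0" ?R L]
    by (auto simp: dist_commute)
  ultimately show "\<phi> i y \<in> cball x0 ?R"
    using dist_triangle[of x0 "\<phi> i y" "\<phi> i x0"] by (simp add: dist_commute algebra_simps)
qed

lemma dist_word_comp_le_radius:
  "set u \<subseteq> {1..N} \<Longrightarrow> dist x0 (word_comp \<phi> u x0) \<le> invariant_radius x0"
  using word_comp_image_subset[of u "{1..N}" \<phi> "cball x0 (invariant_radius x0)"]
    image_cball_invariant_radius invariant_radius_nonneg[of x0] by (auto simp: image_subset_iff)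

lemma dist_fcomp_add_le:
  assumes \<sigma>: "\<sigma> \<in> code_space N"
  shows "dist (fcomp \<phi> \<sigma> (k + m) y) (fcomp \<phi> \<sigma> k y) \<le> L ^ k * invariant_radius y"
proof -
  let ?v = "map (\<lambda>j. \<sigma> (j + k)) [0..<m]"
  have "dist (fcomp \<phi> \<sigma> (k + m) y) (fcomp \<phi> \<sigma> k y) \<le> L ^ k * dist (word_comp \<phi> ?v y) y"
    using dist_word_comp_le_power[OF code_space_prefix[OF \<sigma>]]
    unfolding fcomp_add by (simp add: fcomp_eq_word_comp)
  also have "\<dots> \<le> L ^ k * invariant_radius y"
    using dist_word_comp_le_radius[OF code_space_prefix[OF code_space_shift[OF \<sigma>]]] L_nonneg
    by (intro mult_left_mono) (auto simp: dist_commute)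
  finally show ?thesis .
qed

lemma Cauchy_fcomp:
  assumes \<sigma>: "\<sigma> \<in> code_space N"
  shows "Cauchy (\<lambda>k. fcomp \<phi> \<sigma> k y)"
proof (rule metric_CauchyI)
  fix e :: real assume "0 < e"
  then obtain M where M: "L ^ M * invariant_radius y < e / 2"
    using ex_power_L_less[of "e / 2"] by auto
  have near: "dist (fcomp \<phi> \<sigma> p y) (fcomp \<phi> \<sigma> M y) \<le> L ^ M * invariant_radius y" if "M \<le> p" for p
    using dist_fcomp_add_le[OF \<sigma>, of M "p - M" y] that by simp
  show "\<exists>M. \<forall>p\<ge>M. \<forall>q\<ge>M. dist (fcomp \<phi> \<sigma> p y) (fcomp \<phi> \<sigma> q y) < e"
  proof (intro exI[of _ M] allI impI)
    fix p q assume "M \<le> p" "M \<le> q"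
    then show "dist (fcomp \<phi> \<sigma> p y) (fcomp \<phi> \<sigma> q y) < e"
      using near[of p] near[of q] M dist_triangle2[of "fcomp \<phi> \<sigma> p y" "fcomp \<phi> \<sigma> q y" "fcomp \<phi> \<sigma> M y"]
      by linarith
  qed
qed

lemma fcomp_tendsto_address:
  assumes \<sigma>: "\<sigma> \<in> code_space N"
  shows "(\<lambda>k. fcomp \<phi> \<sigma> k y) \<longlonglongrightarrow> address \<phi> \<sigma>"
proof (rule tendsto_of_dist_le)
  show "(\<lambda>k. fcomp \<phi> \<sigma> k undefined) \<longlonglongrightarrow> address \<phi> \<sigma>"
    using Cauchy_fcomp[OF \<sigma>] unfolding address_def
    by (simp add: Cauchy_convergent_iff convergent_LIMSEQ_iff)
  show "dist (fcomp \<phi> \<sigma> k y) (fcomp \<phi> \<sigma> k undefined) \<le> L ^ k * dist y undefined" for k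
    using dist_word_comp_le_power[OF code_space_prefix[OF \<sigma>]] by (simp add: fcomp_eq_word_comp)
qed (rule LIMSEQ_power_L)

lemma address_shift:
  assumes \<sigma>: "\<sigma> \<in> code_space N"
  shows "address \<phi> \<sigma> = word_comp \<phi> (map \<sigma> [0..<k]) (address \<phi> (\<lambda>j. \<sigma> (j + k)))"
proof (rule LIMSEQ_unique)
  let ?u = "map \<sigma> [0..<k]" and ?\<tau> = "\<lambda>j. \<sigma> (j + k)"
  have "(\<lambda>m. fcomp \<phi> \<sigma> (k + m) y) \<longlonglongrightarrow> address \<phi> \<sigma>" for y
    using LIMSEQ_ignore_initial_segment[OF fcomp_tendsto_address[OF \<sigma>], of k] by (simp add: add.commute)
  then show "(\<lambda>m. word_comp \<phi> ?u (fcomp \<phi> ?\<tau> m y)) \<longlonglongrightarrow> address \<phi> \<sigma>" for y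
    by (simp add: fcomp_add)
  show "(\<lambda>m. word_comp \<phi> ?u (fcomp \<phi> ?\<tau> m undefined)) \<longlonglongrightarrow> word_comp \<phi> ?u (address \<phi> ?\<tau>)"
  proof (rule tendsto_of_dist_le)
    show "dist (word_comp \<phi> ?u (fcomp \<phi> ?\<tau> m undefined)) (word_comp \<phi> ?u (address \<phi> ?\<tau>))
        \<le> L ^ k * dist (fcomp \<phi> ?\<tau> m undefined) (address \<phi> ?\<tau>)" for m
      using dist_word_comp_le_power[OF code_space_prefix[OF \<sigma>]] by simp
    show "(\<lambda>m. L ^ k * dist (fcomp \<phi> ?\<tau> m undefined) (address \<phi> ?\<tau>)) \<longlonglongrightarrow> 0"
      using fcomp_tendsto_address[OF code_space_shift[OF \<sigma>]] tendsto_dist_iff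
        tendsto_mult_right_zero by blast
  qed simp
qed

lemma address_case_nat:
  assumes "i \<in> {1..N}" "\<omega> \<in> code_space N"
  shows "address \<phi> (case_nat i \<omega>) = \<phi> i (address \<phi> \<omega>)"
  using address_shift[OF code_space_case_nat[OF assms], of 1] by simp

lemma address_in_closed:
  assumes \<sigma>: "\<sigma> \<in> code_space N" and S: "closed S" "y \<in> S" "\<And>i. i \<in> {1..N} \<Longrightarrow> \<phi> i ` S \<subseteq> S"
  shows "address \<phi> \<sigma> \<in> S"
proof -
  have "word_comp \<phi> (map \<sigma> [0..<n]) y \<in> S" for n
    using word_comp_image_subset[of "map \<sigma> [0..<n]" "{1..N}" \<phi> S] code_space_prefix[OF \<sigma>] S(2,3)
    by blast
  then show ?thesis
    using closed_sequentially[OF S(1) _ fcomp_tendsto_address[OF \<sigma>, of y]]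
    by (simp add: fcomp_eq_word_comp)
qed

lemma dist_address_le_radius: "\<sigma> \<in> code_space N \<Longrightarrow> dist x0 (address \<phi> \<sigma>) \<le> invariant_radius x0"
  using address_in_closed[of \<sigma> "cball x0 (invariant_radius x0)" x0]
    image_cball_invariant_radius invariant_radius_nonneg by auto

lemma dist_word_comp_address_le:
  assumes \<sigma>: "\<sigma> \<in> code_space N"
  shows "dist (word_comp \<phi> (map \<sigma> [0..<k]) x0) (address \<phi> \<sigma>) \<le> L ^ k * invariant_radius x0"
proof -
  have "dist (word_comp \<phi> (map \<sigma> [0..<k]) x0) (address \<phi> \<sigma>)
      \<le> L ^ k * dist x0 (address \<phi> (\<lambda>j. \<sigma> (j + k)))"
    using dist_word_comp_le_power[OF code_space_prefix[OF \<sigma>]] address_shift[OF \<sigma>, of k] by simp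
  also have "\<dots> \<le> L ^ k * invariant_radius x0"
    using dist_address_le_radius[OF code_space_shift[OF \<sigma>]] L_nonneg by (intro mult_left_mono) auto
  finally show ?thesis .
qed

lemma address_in_K: "\<sigma> \<in> code_space N \<Longrightarrow> address \<phi> \<sigma> \<in> K"
  by (simp add: K_def)

lemma K_nonempty: "K \<noteq> {}"
  using N_ge_1 by (auto simp: K_def code_space_def)

lemma K_invariant: "K = (\<Union>i\<in>{1..N}. \<phi> i ` K)"
proof
  show "K \<subseteq> (\<Union>i\<in>{1..N}. \<phi> i ` K)"
  proof
    fix x assume "x \<in> K"
    then obtain \<sigma> where \<sigma>: "\<sigma> \<in> code_space N" and x: "x = address \<phi> \<sigma>" by (auto simp: K_def)
    have "x = \<phi> (\<sigma> 0) (address \<phi> (\<lambda>j. \<sigma> (j + 1)))" using address_shift[OF \<sigma>, of 1] x by simp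
    moreover have "\<sigma> 0 \<in> {1..N}" using \<sigma> by (auto simp: code_space_def)
    ultimately show "x \<in> (\<Union>i\<in>{1..N}. \<phi> i ` K)"
      using address_in_K[OF code_space_shift[OF \<sigma>, of 1]] by blast
  qed
  show "(\<Union>i\<in>{1..N}. \<phi> i ` K) \<subseteq> K"
    unfolding K_def
  proof safe
    fix i \<omega> assume "i \<in> {1..N}" "\<omega> \<in> code_space N"
    then show "\<phi> i (address \<phi> \<omega>) \<in> address \<phi> ` code_space N"
      using address_case_nat code_space_case_nat by (metis image_eqI)
  qed
qed

lemma compact_closure_K: "compact (closure K)"
  unfolding compact_eq_totally_bounded
proof (intro conjI allI impI)
  show "complete (closure K)" using complete_eq_closed by blast
  fix e :: real and x0 :: 'a assume "0 < e"
  obtain n where n: "L ^ n * invariant_radius x0 < e / 2"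
    using ex_power_L_less[of "e / 2"] \<open>0 < e\<close> by auto
  define P where "P = (\<lambda>u. word_comp \<phi> u x0) ` {u. set u \<subseteq> {1..N} \<and> length u = n}"
  have "finite P" by (simp add: P_def finite_lists_length_eq)
  have "K \<subseteq> (\<Union>p\<in>P. cball p (e / 2))"
  proof
    fix x assume "x \<in> K"
    then obtain \<sigma> where \<sigma>: "\<sigma> \<in> code_space N" and x: "x = address \<phi> \<sigma>" by (auto simp: K_def)
    have "word_comp \<phi> (map \<sigma> [0..<n]) x0 \<in> P" using code_space_prefix[OF \<sigma>] by (auto simp: P_def)
    moreover have "dist (word_comp \<phi> (map \<sigma> [0..<n]) x0) x \<le> e / 2"
      using dist_word_comp_address_le[OF \<sigma>, of n x0] n x by simp
    ultimately show "x \<in> (\<Union>p\<in>P. cball p (e / 2))" by auto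
  qed
  moreover have "closed (\<Union>p\<in>P. cball p (e / 2))" using \<open>finite P\<close> by (intro closed_UN) auto
  ultimately have "closure K \<subseteq> (\<Union>p\<in>P. cball p (e / 2))" by (rule closure_minimal)
  also have "\<dots> \<subseteq> (\<Union>p\<in>P. ball p e)" using \<open>0 < e\<close> by auto
  finally show "\<exists>P. finite P \<and> closure K \<subseteq> (\<Union>p\<in>P. ball p e)" using \<open>finite P\<close> by blast
qed

lemma closure_K_invariant: "closure K = (\<Union>i\<in>{1..N}. \<phi> i ` closure K)"
proof
  have "compact (\<Union>i\<in>{1..N}. \<phi> i ` closure K)"
    using compact_closure_K continuous_on_\<phi> by (intro compact_UN compact_continuous_image) auto
  moreover have "K \<subseteq> (\<Union>i\<in>{1..N}. \<phi> i ` closure K)"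
    using K_invariant[THEN equalityD1] closure_subset by blast
  ultimately show "closure K \<subseteq> (\<Union>i\<in>{1..N}. \<phi> i ` closure K)"
    using closure_minimal compact_imp_closed by blast
  have "\<phi> i ` closure K \<subseteq> closure K" if "i \<in> {1..N}" for i
  proof (rule image_closure_subset[OF continuous_on_\<phi>[OF that] closed_closure])
    show "\<phi> i ` K \<subseteq> closure K" using that K_invariant[THEN equalityD2] closure_subset by blast
  qed
  then show "(\<Union>i\<in>{1..N}. \<phi> i ` closure K) \<subseteq> closure K" by blast
qed

lemma invariant_subset_K:
  assumes A: "bounded A" "A \<subseteq> (\<Union>i\<in>{1..N}. \<phi> i ` A)" and a: "a \<in> A"
  shows "a \<in> K"
proof -
  have "\<forall>b\<in>A. \<exists>i\<in>{1..N}. \<exists>b'\<in>A. \<phi> i b' = b" using A(2) by blast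
  then obtain idx pre where idx: "\<And>b. b \<in> A \<Longrightarrow> idx b \<in> {1..N}"
    and pre: "\<And>b. b \<in> A \<Longrightarrow> pre b \<in> A" and eq: "\<And>b. b \<in> A \<Longrightarrow> \<phi> (idx b) (pre b) = b"
    by metis
  define pts where "pts k = (pre ^^ k) a" for k
  define \<sigma> where "\<sigma> k = idx (pts k)" for k
  have pts_in: "pts k \<in> A" for k by (induct k) (simp_all add: pts_def a pre)
  have \<sigma>: "\<sigma> \<in> code_space N" using idx pts_in by (auto simp: code_space_def \<sigma>_def)
  have a_eq: "a = word_comp \<phi> (map \<sigma> [0..<k]) (pts k)" for k
  proof (induct k)
    case (Suc k)
    have "\<phi> (\<sigma> k) (pts (Suc k)) = pts k" using eq[OF pts_in[of k]] by (simp add: \<sigma>_def pts_def)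
    then show ?case using Suc by (simp add: word_comp_append)
  qed (simp add: pts_def)
  obtain B where B: "\<And>b. b \<in> A \<Longrightarrow> dist a b \<le> B"
    using A(1) bounded_any_center by blast
  have "(\<lambda>k. fcomp \<phi> \<sigma> k a) \<longlonglongrightarrow> a"
  proof (rule tendsto_of_dist_le)
    show "dist (fcomp \<phi> \<sigma> k a) a \<le> L ^ k * B" for k
    proof -
      have "dist (fcomp \<phi> \<sigma> k a) a \<le> L ^ k * dist a (pts k)"
        using dist_word_comp_le_power[OF code_space_prefix[OF \<sigma>], of k a "pts k"] a_eq[of k]
        by (simp add: fcomp_eq_word_comp)
      also have "\<dots> \<le> L ^ k * B" using B[OF pts_in] L_nonneg by (simp add: mult_left_mono)
      finally show ?thesis .
    qed
  qed (rule LIMSEQ_power_L tendsto_const)+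
  then have "a = address \<phi> \<sigma>" using fcomp_tendsto_address[OF \<sigma>] LIMSEQ_unique by blast
  then show ?thesis using \<sigma> by (simp add: K_def)
qed

lemma closure_K_eq: "closure K = K"
  using invariant_subset_K[OF compact_imp_bounded[OF compact_closure_K] equalityD1[OF closure_K_invariant]]
    closure_subset by blast

lemma compact_K: "compact K"
  using compact_closure_K closure_K_eq by simp

lemma attractor_eq: "attractor N \<phi> = K"
  unfolding attractor_def
proof (rule the_equality)
  show "compact K \<and> K \<noteq> {} \<and> K = (\<Union>i\<in>{1..N}. \<phi> i ` K)"
    by (intro conjI compact_K K_nonempty K_invariant)
  fix A assume "compact A \<and> A \<noteq> {} \<and> A = (\<Union>i\<in>{1..N}. \<phi> i ` A)"
  then have A: "compact A" "A \<noteq> {}" "A = (\<Union>i\<in>{1..N}. \<phi> i ` A)" by blast+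
  obtain y where "y \<in> A" using A(2) by blast
  have "\<phi> i ` A \<subseteq> A" if "i \<in> {1..N}" for i using A(3) that by blast
  then have "K \<subseteq> A"
    using address_in_closed[OF _ compact_imp_closed[OF A(1)] \<open>y \<in> A\<close>] by (auto simp: K_def)
  moreover have "A \<subseteq> K"
    using invariant_subset_K[OF compact_imp_bounded[OF A(1)] equalityD1[OF A(3)]] by blast
  ultimately show "A = K" by blast
qed

end

lemma lex_le_antisym: "lex_le a b \<Longrightarrow> lex_le b a \<Longrightarrow> a = b"
proof (rule ccontr)
  assume ab: "lex_le a b" "lex_le b a" "a \<noteq> b"
  then obtain k1 where k1: "\<forall>j<k1. a j = b j" "a k1 < b k1" by (auto simp: lex_le_def lex_less_def)
  from ab obtain k2 where k2: "\<forall>j<k2. b j = a j" "b k2 < a k2" by (auto simp: lex_le_def lex_less_def)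
  show False
    using k1 k2 by (cases k1 k2 rule: linorder_cases) force+
qed

lemma sequence_by_prefix_choice:
  assumes "P []" and step: "\<And>xs. P xs \<Longrightarrow> \<exists>x. Q xs x \<and> P (xs @ [x])"
  shows "\<exists>\<xi>. \<forall>k. P (map \<xi> [0..<k]) \<and> Q (map \<xi> [0..<k]) (\<xi> k)"
proof -
  define nxt where "nxt xs = (SOME x. Q xs x \<and> P (xs @ [x]))" for xs
  have nxt: "Q xs (nxt xs) \<and> P (xs @ [nxt xs])" if "P xs" for xs
    unfolding nxt_def using someI_ex[OF step[OF that]] .
  define pre where "pre k = ((\<lambda>xs. xs @ [nxt xs]) ^^ k) []" for k
  have P_pre: "P (pre k)" for k
    by (induct k) (simp_all add: pre_def assms(1) nxt)
  define \<xi> where "\<xi> k = nxt (pre k)" for k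
  have map_\<xi>: "map \<xi> [0..<k] = pre k" for k
    by (induct k) (simp_all add: pre_def \<xi>_def)
  have "P (map \<xi> [0..<k]) \<and> Q (map \<xi> [0..<k]) (\<xi> k)" for k
    using P_pre[of k] nxt[OF P_pre[of k]] by (simp add: map_\<xi> \<xi>_def)
  then show ?thesis by blast
qed

lemma lex_greatest_sequence:
  assumes "S \<noteq> {}" "S \<subseteq> code_space N"
  obtains \<sigma> where "\<sigma> \<in> code_space N" "\<And>k. \<exists>\<omega>\<in>S. map \<omega> [0..<k] = map \<sigma> [0..<k]"
    "\<And>\<omega>. \<omega> \<in> S \<Longrightarrow> lex_le \<omega> \<sigma>"
proof -
  \<comment> \<open>Greedy construction: extend the prefix by the largest digit allowed by some member of \<open>S\<close>.\<close>
  define D where "D xs = {\<omega> (length xs) |\<omega>. \<omega> \<in> S \<and> map \<omega> [0..<length xs] = xs}" for xs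
  have D_sub: "D xs \<subseteq> {1..N}" for xs using assms(2) by (auto simp: D_def code_space_def)
  then have D_fin: "finite (D xs)" for xs by (meson finite_atLeastAtMost finite_subset)
  have "\<exists>\<sigma>. \<forall>k. (\<exists>\<omega>\<in>S. map \<omega> [0..<length (map \<sigma> [0..<k])] = map \<sigma> [0..<k])
      \<and> \<sigma> k = Max (D (map \<sigma> [0..<k]))"
  proof (rule sequence_by_prefix_choice)
    show "\<exists>\<omega>\<in>S. map \<omega> [0..<length []] = []" using assms(1) by auto
    fix xs assume "\<exists>\<omega>\<in>S. map \<omega> [0..<length xs] = xs"
    then have "D xs \<noteq> {}" by (auto simp: D_def)
    then have "Max (D xs) \<in> D xs" using D_fin by (rule Max_in[rotated])
    then show "\<exists>x. x = Max (D xs) \<and> (\<exists>\<omega>\<in>S. map \<omega> [0..<length (xs @ [x])] = xs @ [x])"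
      by (auto simp: D_def)
  qed
  then obtain \<sigma> where \<sigma>: "\<forall>k. (\<exists>\<omega>\<in>S. map \<omega> [0..<length (map \<sigma> [0..<k])] = map \<sigma> [0..<k])
      \<and> \<sigma> k = Max (D (map \<sigma> [0..<k]))" by blast
  have pre: "\<exists>\<omega>\<in>S. map \<omega> [0..<k] = map \<sigma> [0..<k]" for k
    using spec[OF \<sigma>, of k] by (simp only: length_map length_upt diff_zero)
  have max: "\<sigma> k = Max (D (map \<sigma> [0..<k]))" for k using \<sigma> by blast
  have in_D: "\<sigma> k \<in> D (map \<sigma> [0..<k])" for k
  proof -
    obtain \<omega> where "\<omega> \<in> S" "map \<omega> [0..<k] = map \<sigma> [0..<k]" using pre by blast
    then have "\<omega> k \<in> D (map \<sigma> [0..<k])" unfolding D_def by force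
    then show ?thesis using max[of k] Max_in[OF D_fin] by auto
  qed
  have "\<sigma> \<in> code_space N" using in_D D_sub unfolding code_space_def by blast
  moreover have "lex_le \<omega> \<sigma>" if \<omega>: "\<omega> \<in> S" for \<omega>
  proof (cases "\<omega> = \<sigma>")
    case False
    then obtain j where "\<omega> j \<noteq> \<sigma> j" by auto
    define k where "k = (LEAST j. \<omega> j \<noteq> \<sigma> j)"
    have k: "\<omega> k \<noteq> \<sigma> k" unfolding k_def by (rule LeastI) fact
    have below: "\<forall>j<k. \<omega> j = \<sigma> j" unfolding k_def using not_less_Least by blast
    then have "map \<omega> [0..<k] = map \<sigma> [0..<k]" by simp
    then have "\<omega> k \<in> D (map \<sigma> [0..<k])" using \<omega> by (force simp: D_def)
    then have "\<omega> k \<le> \<sigma> k" using max[of k] Max_ge[OF D_fin] by simp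
    then have "\<omega> k < \<sigma> k" using k by simp
    then show ?thesis using below by (auto simp: lex_le_def lex_less_def)
  qed (simp add: lex_le_def)
  ultimately show ?thesis using that pre by blast
qed

context contractive_ifs
begin

lemma address_eq_if_prefixes_extend:
  assumes \<sigma>: "\<sigma> \<in> code_space N"
    and ext: "\<And>k. \<exists>\<omega>\<in>code_space N. address \<phi> \<omega> = x \<and> map \<omega> [0..<k] = map \<sigma> [0..<k]"
  shows "address \<phi> \<sigma> = x"
proof -
  have "(\<lambda>k. fcomp \<phi> \<sigma> k x) \<longlonglongrightarrow> x"
  proof (rule tendsto_of_dist_le)
    show "dist (fcomp \<phi> \<sigma> k x) x \<le> L ^ k * invariant_radius x" for k
      using ext[of k] dist_word_comp_address_le by (metis fcomp_eq_word_comp)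
  qed (rule LIMSEQ_power_L tendsto_const)+
  then show ?thesis using fcomp_tendsto_address[OF \<sigma>] LIMSEQ_unique by blast
qed

lemma tops_address:
  assumes "x \<in> K"
  shows "tops N \<phi> x \<in> code_space N" and "address \<phi> (tops N \<phi> x) = x"
proof -
  define S where "S = {\<omega> \<in> code_space N. address \<phi> \<omega> = x}"
  have "S \<noteq> {}" using assms by (auto simp: S_def K_def)
  then obtain \<sigma> where \<sigma>: "\<sigma> \<in> code_space N" and "\<And>k. \<exists>\<omega>\<in>S. map \<omega> [0..<k] = map \<sigma> [0..<k]"
    and greatest: "\<And>\<omega>. \<omega> \<in> S \<Longrightarrow> lex_le \<omega> \<sigma>"
    by (rule lex_greatest_sequence) (auto simp: S_def)
  then have addr: "address \<phi> \<sigma> = x"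
    by (intro address_eq_if_prefixes_extend) (auto simp: S_def)
  have "tops N \<phi> x = \<sigma>"
    unfolding tops_def
  proof (rule the_equality)
    show "\<sigma> \<in> code_space N \<and> address \<phi> \<sigma> = x \<and> (\<forall>\<omega>\<in>code_space N. address \<phi> \<omega> = x \<longrightarrow> lex_le \<omega> \<sigma>)"
      using \<sigma> addr greatest by (auto simp: S_def)
    fix \<tau> assume "\<tau> \<in> code_space N \<and> address \<phi> \<tau> = x \<and> (\<forall>\<omega>\<in>code_space N. address \<phi> \<omega> = x \<longrightarrow> lex_le \<omega> \<tau>)"
    then show "\<tau> = \<sigma>" using \<sigma> addr greatest[of \<tau>] lex_le_antisym by (auto simp: S_def)
  qed
  then show "tops N \<phi> x \<in> code_space N" "address \<phi> (tops N \<phi> x) = x" using \<sigma> addr by simp_all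
qed

end

section \<open>Hausdorff measures\<close>

lemma diam_wrt_le: "(\<And>x y. x \<in> U \<Longrightarrow> y \<in> U \<Longrightarrow> d x y \<le> t) \<Longrightarrow> diam_wrt d U \<le> ennreal t"
  unfolding diam_wrt_def by (intro SUP_least ennreal_leI) auto

lemma diam_wrt_ge: "x \<in> U \<Longrightarrow> y \<in> U \<Longrightarrow> ennreal (d x y) \<le> diam_wrt d U"
  unfolding diam_wrt_def by (meson SUP_upper2 order_refl)

lemma diam_wrt_empty: "diam_wrt d {} = 0"
  by (simp add: diam_wrt_def bot_ennreal)

lemma diam_wrt_fst_le: "diam_wrt dist (fst ` C) \<le> diam_wrt max_dist C"
proof -
  have "ennreal (dist (fst p) (fst q)) \<le> diam_wrt max_dist C" if "p \<in> C" "q \<in> C" for p q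
  proof -
    have "ennreal (dist (fst p) (fst q)) \<le> ennreal (max_dist p q)"
      by (intro ennreal_leI) (simp add: max_dist_def)
    also have "\<dots> \<le> diam_wrt max_dist C" using that by (rule diam_wrt_ge)
    finally show ?thesis .
  qed
  then show ?thesis unfolding diam_wrt_def[of dist] by (auto intro!: SUP_least)
qed

lemma diam_pow_le:
  assumes "0 < s" "0 \<le> t" "diam_wrt d U \<le> ennreal t"
  shows "diam_pow d s U \<le> ennreal (t powr s)"
proof (cases "U = {}")
  case False
  have "diam_wrt d U \<noteq> \<infinity>" using assms(3) by (auto simp: top_unique)
  moreover have "enn2real (diam_wrt d U) powr s \<le> t powr s"
    using assms by (intro powr_mono2 enn2real_leI) auto
  ultimately show ?thesis using False assms(1) by (simp add: diam_pow_def ennreal_leI)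
qed (simp add: diam_pow_def)

lemma diam_pow_ge:
  assumes "0 < s" "x \<in> U" "y \<in> U" "0 \<le> t" "t \<le> d x y"
  shows "ennreal (t powr s) \<le> diam_pow d s U"
proof (cases "diam_wrt d U = \<infinity>")
  case False
  have "ennreal t \<le> diam_wrt d U"
    using assms diam_wrt_ge[of x U y d] by (meson ennreal_leI order_trans)
  also have "\<dots> = ennreal (enn2real (diam_wrt d U))" using False by (simp add: ennreal_enn2real_if)
  finally have "t \<le> enn2real (diam_wrt d U)" by (simp add: ennreal_le_iff)
  then have "t powr s \<le> enn2real (diam_wrt d U) powr s" using assms by (intro powr_mono2) auto
  then show ?thesis using assms False by (auto simp: diam_pow_def ennreal_leI)
qed (use assms in \<open>auto simp: diam_pow_def\<close>)

lemma diam_pow_mono: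
  assumes "0 < s" "U = {} \<longleftrightarrow> V = {}" "diam_wrt d U \<le> diam_wrt d' V"
  shows "diam_pow d s U \<le> diam_pow d' s V"
proof (cases "V = {} \<or> diam_wrt d' V = \<infinity>")
  case False
  have "diam_pow d s U \<le> ennreal (enn2real (diam_wrt d' V) powr s)"
    using assms False by (intro diam_pow_le) (auto simp: ennreal_enn2real_if)
  also have "\<dots> = diam_pow d' s V" using False assms(1) by (simp add: diam_pow_def)
  finally show ?thesis .
qed (use assms in \<open>auto simp: diam_pow_def\<close>)

lemma hausdorff_delta_le_finite_cover:
  assumes "finite W" "E \<subseteq> (\<Union>u\<in>W. C u)" "\<And>u. u \<in> W \<Longrightarrow> diam_wrt d (C u) \<le> ennreal \<delta>"
  shows "hausdorff_delta d s \<delta> E \<le> (\<Sum>u\<in>W. diam_pow d s (C u))"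
proof -
  obtain e where e: "bij_betw e {0..<card W} W" using ex_bij_betw_nat_finite[OF assms(1)] by blast
  define C' where "C' i = (if i < card W then C (e i) else {})" for i
  have "E \<subseteq> (\<Union>i. C' i)"
  proof
    fix x assume "x \<in> E"
    then obtain u where "u \<in> W" "x \<in> C u" using assms(2) by blast
    moreover have "u \<in> e ` {0..<card W}" using bij_betw_imp_surj_on[OF e] \<open>u \<in> W\<close> by simp
    then obtain i where "i < card W" "u = e i" by auto
    ultimately show "x \<in> (\<Union>i. C' i)" by (auto simp: C'_def)
  qed
  moreover have "diam_wrt d (C' i) \<le> ennreal \<delta>" for i
    using assms(3) bij_betw_apply[OF e] by (simp add: C'_def diam_wrt_empty)
  ultimately have "hausdorff_delta d s \<delta> E \<le> (\<Sum>i. diam_pow d s (C' i))"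
    unfolding hausdorff_delta_def by (intro INF_lower) blast
  also have "\<dots> = (\<Sum>i<card W. diam_pow d s (C' i))"
    by (rule suminf_finite) (auto simp: C'_def diam_pow_def)
  also have "\<dots> = (\<Sum>u\<in>W. diam_pow d s (C u))"
    using sum.reindex_bij_betw[OF e] by (simp add: C'_def atLeast0LessThan)
  finally show ?thesis .
qed

lemma hausdorff_delta_fst_le:
  assumes "0 < s"
  shows "hausdorff_delta dist s \<delta> (fst ` E) \<le> hausdorff_delta max_dist s \<delta> E"
  unfolding hausdorff_delta_def
proof (rule INF_greatest)
  fix C :: "nat \<Rightarrow> ('a \<times> 'b) set"
  assume "C \<in> {C. E \<subseteq> (\<Union>i. C i) \<and> (\<forall>i. diam_wrt max_dist (C i) \<le> ennreal \<delta>)}"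
  then have C: "E \<subseteq> (\<Union>i. C i)" "\<And>i. diam_wrt max_dist (C i) \<le> ennreal \<delta>" by auto
  have "diam_wrt dist (fst ` C i) \<le> ennreal \<delta>" for i
    using diam_wrt_fst_le C(2) by (rule order_trans)
  moreover have "fst ` E \<subseteq> (\<Union>i. fst ` C i)" using C(1) by blast
  ultimately have "(\<lambda>i. fst ` C i) \<in> {C. fst ` E \<subseteq> (\<Union>i. C i) \<and> (\<forall>i. diam_wrt dist (C i) \<le> ennreal \<delta>)}"
    by blast
  then have "(INF C\<in>{C. fst ` E \<subseteq> (\<Union>i. C i) \<and> (\<forall>i. diam_wrt dist (C i) \<le> ennreal \<delta>)}.
      \<Sum>i. diam_pow dist s (C i)) \<le> (\<Sum>i. diam_pow dist s (fst ` C i))"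
    by (rule INF_lower)
  also have "\<dots> \<le> (\<Sum>i. diam_pow max_dist s (C i))"
    using assms diam_wrt_fst_le by (intro suminf_le diam_pow_mono) auto
  finally show "(INF C\<in>{C. fst ` E \<subseteq> (\<Union>i. C i) \<and> (\<forall>i. diam_wrt dist (C i) \<le> ennreal \<delta>)}.
      \<Sum>i. diam_pow dist s (C i)) \<le> (\<Sum>i. diam_pow max_dist s (C i))" .
qed

lemma hausdorff_outer_eq_0I:
  assumes "\<And>\<delta> \<epsilon>. 0 < \<delta> \<Longrightarrow> 0 < \<epsilon> \<Longrightarrow> hausdorff_delta d s \<delta> E \<le> ennreal \<epsilon>"
  shows "hausdorff_outer d s E = 0"
proof -
  have "hausdorff_delta d s \<delta> E \<le> 0" if "0 < \<delta>" for \<delta>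
  proof (rule ennreal_le_epsilon)
    fix \<epsilon> :: real assume "0 < \<epsilon>"
    then show "hausdorff_delta d s \<delta> E \<le> 0 + ennreal \<epsilon>" using assms[OF that] by simp
  qed
  then have "(SUP \<delta>\<in>{0<..}. hausdorff_delta d s \<delta> E) \<le> 0" by (intro SUP_least) simp
  then show ?thesis unfolding hausdorff_outer_def by simp
qed

lemma hausdorff_outer_ge: "0 < \<delta> \<Longrightarrow> hausdorff_delta d s \<delta> E \<le> hausdorff_outer d s E"
  unfolding hausdorff_outer_def by (rule SUP_upper) simp

lemma hausdorff_outer_0_nonempty:
  assumes "E \<noteq> {}"
  shows "hausdorff_outer d 0 E \<noteq> 0"
proof -
  obtain p where p: "p \<in> E" using assms by blast
  have "1 \<le> hausdorff_delta d 0 1 E"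
    unfolding hausdorff_delta_def
  proof (rule INF_greatest)
    fix C :: "nat \<Rightarrow> 'a set" assume "C \<in> {C. E \<subseteq> (\<Union>i. C i) \<and> (\<forall>i. diam_wrt d (C i) \<le> ennreal 1)}"
    then obtain i where i: "p \<in> C i" using p by blast
    have "(\<Sum>n\<in>{i}. diam_pow d 0 (C n)) \<le> (\<Sum>n. diam_pow d 0 (C n))"
      by (rule sum_le_suminf) auto
    moreover have "diam_pow d 0 (C i) = 1" using i by (auto simp: diam_pow_def)
    ultimately show "1 \<le> (\<Sum>n. diam_pow d 0 (C n))" by simp
  qed
  also have "\<dots> \<le> hausdorff_outer d 0 E" by (rule hausdorff_outer_ge) simp
  finally show ?thesis by (metis le_zero_eq one_neq_zero)
qed

lemma hausdorff_dim_eqI: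
  assumes "0 \<le> s0"
    and zero: "\<And>s. s0 < s \<Longrightarrow> hausdorff_outer d s E = 0"
    and pos: "\<And>s. 0 \<le> s \<Longrightarrow> s < s0 \<Longrightarrow> hausdorff_outer d s E \<noteq> 0"
  shows "hausdorff_dim d E = ereal s0"
  unfolding hausdorff_dim_def
proof (rule antisym)
  show "Inf {ereal s |s. 0 \<le> s \<and> hausdorff_outer d s E = 0} \<le> ereal s0"
  proof (rule ereal_le_epsilon2)
    fix e :: real assume "0 < e"
    then have "ereal (s0 + e) \<in> {ereal s |s. 0 \<le> s \<and> hausdorff_outer d s E = 0}"
      using assms(1) zero[of "s0 + e"] by auto
    then have "Inf {ereal s |s. 0 \<le> s \<and> hausdorff_outer d s E = 0} \<le> ereal (s0 + e)"
      by (rule Inf_lower)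
    then show "Inf {ereal s |s. 0 \<le> s \<and> hausdorff_outer d s E = 0} \<le> ereal s0 + ereal e"
      by simp
  qed
  show "ereal s0 \<le> Inf {ereal s |s. 0 \<le> s \<and> hausdorff_outer d s E = 0}"
  proof (rule Inf_greatest)
    fix z assume "z \<in> {ereal s |s. 0 \<le> s \<and> hausdorff_outer d s E = 0}"
    then obtain s where "z = ereal s" "0 \<le> s" "hausdorff_outer d s E = 0" by blast
    then show "ereal s0 \<le> z" using pos[of s] by (cases "s < s0") auto
  qed
qed

lemma suminf_ennreal_halves: "0 \<le> a \<Longrightarrow> (\<Sum>i. ennreal (a * (1/2) ^ Suc (Suc i))) = ennreal (a / 2)"
proof -
  assume "0 \<le> a"
  have "(\<lambda>i. a * (1/2) ^ Suc (Suc i)) sums (a / 4 * 2)"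
    using sums_mult[OF geometric_sums[of "1/2 :: real"], of "a / 4"] by (simp add: field_simps)
  then show ?thesis
    using \<open>0 \<le> a\<close> by (simp add: suminf_ennreal2 sums_iff)
qed

section \<open>Weighted covers of the code space\<close>

definition cylinder_mass ::
  "(nat \<Rightarrow> bool) \<Rightarrow> (nat \<Rightarrow> nat list) \<Rightarrow> (nat list \<Rightarrow> ennreal) \<Rightarrow> nat list \<Rightarrow> ennreal" where
  "cylinder_mass P u W x = (\<Sum>i. if P i \<and> (\<exists>z. u i = x @ z) then W (u i) else 0)"

lemma cylinder_mass_ge: "P i \<Longrightarrow> W (u i) \<le> cylinder_mass P u W (u i)"
  unfolding cylinder_mass_def
  using sum_le_suminf[of "\<lambda>n. if P n \<and> (\<exists>z. u n = u i @ z) then W (u n) else 0" "{i}"] by simp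

lemma cylinder_mass_children_le:
  assumes "finite V" "\<And>i. P i \<Longrightarrow> u i \<noteq> x"
  shows "(\<Sum>v\<in>V. cylinder_mass P u W (x @ [v])) \<le> cylinder_mass P u W x"
  unfolding cylinder_mass_def
proof (subst suminf_sum[symmetric], simp, rule suminf_le)
  fix i
  show "(\<Sum>v\<in>V. if P i \<and> (\<exists>z. u i = (x @ [v]) @ z) then W (u i) else 0)
      \<le> (if P i \<and> (\<exists>z. u i = x @ z) then W (u i) else 0)"
  proof (cases "P i \<and> (\<exists>z. u i = x @ z)")
    case True
    then obtain v0 z where z: "u i = x @ v0 # z" "P i"
      using assms(2) by (metis append.right_neutral neq_Nil_conv)
    then have "(\<Sum>v\<in>V. if P i \<and> (\<exists>z. u i = (x @ [v]) @ z) then W (u i) else 0)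
        = (\<Sum>v\<in>V. if v = v0 then W (u i) else 0)"
      by (intro sum.cong) auto
    also have "\<dots> \<le> W (u i)" using assms(1) by (simp add: sum.delta)
    finally show ?thesis using True by simp
  next
    case False
    then have "\<not> (P i \<and> (\<exists>z. u i = (x @ [v]) @ z))" for v by (metis append_assoc)
    then have "(\<Sum>v\<in>V. if P i \<and> (\<exists>z. u i = (x @ [v]) @ z) then W (u i) else 0) = 0"
      by (intro sum.neutral ballI if_not_P)
    then show ?thesis by (metis zero_le)
  qed
qed simp_all

text \<open>A cover of the code space by cylinders has total weight at least one when the letter
  weights sum to at least one: otherwise every deficient node has a deficient child, and
  following deficient children yields a sequence that avoids all cylinders of the cover.\<close>

lemma cylinder_cover_weight_ge_1:
  fixes w :: "nat \<Rightarrow> real" and u :: "nat \<Rightarrow> nat list"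
  assumes w_nonneg: "\<And>v. 0 \<le> w v" and w_sum: "1 \<le> (\<Sum>v\<in>{1..M}. w v)"
    and cover: "\<And>\<xi>. (\<forall>k. \<xi> k \<in> {1..M}) \<Longrightarrow> \<exists>i. P i \<and> map \<xi> [0..<length (u i)] = u i"
  shows "1 \<le> (\<Sum>i. if P i then ennreal (prod_list (map w (u i))) else 0)"
proof (rule ccontr)
  define W where "W x = ennreal (prod_list (map w x))" for x
  define S where "S = cylinder_mass P u W"
  have W_snoc: "W (x @ [v]) = W x * ennreal (w v)" for x v
  proof -
    have "0 \<le> prod_list (map w x)" using w_nonneg by (intro prod_list_nonneg) auto
    then show ?thesis using w_nonneg by (simp add: W_def ennreal_mult)
  qed
  have "S [] = (\<Sum>i. if P i then ennreal (prod_list (map w (u i))) else 0)"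
    unfolding S_def cylinder_mass_def W_def by simp
  moreover assume "\<not> ?thesis"
  ultimately have root: "S [] < W []" by (simp add: W_def not_le)
  have child: "\<exists>v. v \<in> {1..M} \<and> S (x @ [v]) < W (x @ [v])" if deficient: "S x < W x" for x
  proof (rule ccontr)
    assume "\<not> ?thesis"
    then have "W (x @ [v]) \<le> S (x @ [v])" if "v \<in> {1..M}" for v using that by (auto simp: not_less)
    then have "(\<Sum>v\<in>{1..M}. W (x @ [v])) \<le> (\<Sum>v\<in>{1..M}. S (x @ [v]))" by (rule sum_mono)
    also have "\<dots> \<le> S x"
    proof (unfold S_def, rule cylinder_mass_children_le)
      show "u i \<noteq> x" if "P i" for i
        using cylinder_mass_ge[of P i W u, OF that] deficient by (metis S_def leD)
    qed simp
    finally have "(\<Sum>v\<in>{1..M}. W (x @ [v])) < W x" using deficient by simp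
    moreover have "W x \<le> (\<Sum>v\<in>{1..M}. W (x @ [v]))"
    proof -
      have "W x = W x * 1" by simp
      also have "\<dots> \<le> W x * ennreal (\<Sum>v\<in>{1..M}. w v)"
        using w_sum by (intro mult_left_mono) simp_all
      also have "\<dots> = W x * (\<Sum>v\<in>{1..M}. ennreal (w v))" using w_nonneg by simp
      also have "\<dots> = (\<Sum>v\<in>{1..M}. W x * ennreal (w v))" by (rule sum_distrib_left)
      finally show ?thesis by (simp only: W_snoc)
    qed
    ultimately show False by simp
  qed
  obtain \<xi> where \<xi>: "\<And>k. S (map \<xi> [0..<k]) < W (map \<xi> [0..<k]) \<and> \<xi> k \<in> {1..M}"
    using sequence_by_prefix_choice[of "\<lambda>x. S x < W x" "\<lambda>_ v. v \<in> {1..M}", OF root child] by blast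
  then obtain i where "P i" "map \<xi> [0..<length (u i)] = u i" using cover by blast
  then show False using \<xi>[of "length (u i)"] cylinder_mass_ge[of P i W u] by (simp add: S_def leD)
qed

section \<open>Strongly separated similarity systems\<close>

locale similarity_ifs =
  fixes N :: nat and \<phi> :: "nat \<Rightarrow> 'a::complete_space \<Rightarrow> 'a" and \<rho> :: "nat \<Rightarrow> real"
  assumes one_le_N: "1 \<le> N" and ratio: "\<And>i. i \<in> {1..N} \<Longrightarrow> 0 < \<rho> i \<and> \<rho> i < 1"
    and similarity: "\<And>i x y. i \<in> {1..N} \<Longrightarrow> dist (\<phi> i x) (\<phi> i y) = \<rho> i * dist x y"
begin

definition max_ratio :: real where "max_ratio = Max (\<rho> ` {1..N})"

lemma ratio_le_max_ratio: "i \<in> {1..N} \<Longrightarrow> \<rho> i \<le> max_ratio"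
  unfolding max_ratio_def by (intro Max_ge) auto

lemma max_ratio_pos: "0 < max_ratio" and max_ratio_less_1: "max_ratio < 1"
proof -
  have "max_ratio \<in> \<rho> ` {1..N}" unfolding max_ratio_def using one_le_N by (intro Max_in) auto
  then show "0 < max_ratio" "max_ratio < 1" using ratio by auto
qed

end

sublocale similarity_ifs \<subseteq> contractive_ifs N \<phi> max_ratio
proof
  fix i x y assume "i \<in> {1..N}"
  then show "dist (\<phi> i x) (\<phi> i y) \<le> max_ratio * dist x y"
    using similarity ratio_le_max_ratio by (simp add: mult_right_mono)
qed (use one_le_N max_ratio_pos max_ratio_less_1 in auto)

context similarity_ifs
begin

lemma dist_word_comp_ratio:
  "set u \<subseteq> {1..N} \<Longrightarrow> dist (word_comp \<phi> u x) (word_comp \<phi> u y) = prod_list (map \<rho> u) * dist x y"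
  using similarity by (intro dist_word_comp_eq) auto

lemma ratio_prod_pos: "set u \<subseteq> {1..N} \<Longrightarrow> 0 < prod_list (map \<rho> u)"
  using ratio by (induct u) auto

lemma ratio_prod_le_power: "set u \<subseteq> {1..N} \<Longrightarrow> prod_list (map \<rho> u) \<le> max_ratio ^ length u"
  using ratio ratio_le_max_ratio by (intro prod_list_le_power) (auto simp: less_imp_le)

lemma ratio_prod_powr:
  "set u \<subseteq> {1..N} \<Longrightarrow> prod_list (map \<rho> u) powr s = prod_list (map (\<lambda>i. \<rho> i powr s) u)"
  using ratio by (intro prod_list_powr) (auto simp: less_imp_le)

lemma weight_le_power:
  assumes "0 \<le> s" "set u \<subseteq> {1..N}"
  shows "prod_list (map (\<lambda>i. \<rho> i powr s) u) \<le> (max_ratio powr s) ^ length u"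
proof (rule prod_list_le_power)
  fix i assume "i \<in> set u"
  then have "i \<in> {1..N}" using assms(2) by blast
  then show "0 \<le> \<rho> i powr s \<and> \<rho> i powr s \<le> max_ratio powr s"
    using ratio[of i] ratio_le_max_ratio[of i] assms(1) by (simp add: powr_mono2)
qed

lemma max_ratio_powr_less_1: "0 < s \<Longrightarrow> max_ratio powr s < 1"
  using powr_less_mono2[of s max_ratio 1] max_ratio_pos max_ratio_less_1 by simp

lemma similarity_ifs_words:
  assumes "1 \<le> M" and w: "\<And>j. j \<in> {1..M} \<Longrightarrow> set (w j) \<subseteq> {1..N} \<and> w j \<noteq> []"
  shows "similarity_ifs M (\<lambda>j. word_comp \<phi> (w j)) (\<lambda>j. prod_list (map \<rho> (w j)))"
proof unfold_locales
  fix j assume j: "j \<in> {1..M}"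
  have "prod_list (map \<rho> (w j)) \<le> max_ratio"
    using ratio_prod_le_power[of "w j"] power_decreasing[of 1 "length (w j)" max_ratio] w[OF j]
      max_ratio_pos max_ratio_less_1 by (simp add: Suc_leI)
  then show "0 < prod_list (map \<rho> (w j)) \<and> prod_list (map \<rho> (w j)) < 1"
    using ratio_prod_pos[of "w j"] w[OF j] max_ratio_less_1 by simp
  show "dist (word_comp \<phi> (w j) x) (word_comp \<phi> (w j) y) = prod_list (map \<rho> (w j)) * dist x y" for x y
    using dist_word_comp_ratio w[OF j] by blast
qed (rule assms(1))

end

locale separated_similarity_ifs = similarity_ifs +
  fixes A :: "'a set" and \<delta> :: real
  assumes closed_A: "closed A" and A_nonempty: "A \<noteq> {}"
    and invariant_A: "\<And>i. i \<in> {1..N} \<Longrightarrow> \<phi> i ` A \<subseteq> A"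
    and \<delta>_pos: "0 < \<delta>"
    and separation: "\<And>i j a b. i \<in> {1..N} \<Longrightarrow> j \<in> {1..N} \<Longrightarrow> i \<noteq> j \<Longrightarrow> a \<in> A \<Longrightarrow> b \<in> A \<Longrightarrow>
      \<delta> \<le> dist (\<phi> i a) (\<phi> j b)"
begin

lemma address_in_A: "\<sigma> \<in> code_space N \<Longrightarrow> address \<phi> \<sigma> \<in> A"
  using A_nonempty address_in_closed[OF _ closed_A _ invariant_A] by blast

lemma dist_branching_addresses:
  assumes \<sigma>: "\<sigma> \<in> code_space N" and \<omega>: "\<omega> \<in> code_space N"
    and "map \<sigma> [0..<k] = map \<omega> [0..<k]" and "\<sigma> k \<noteq> \<omega> k"
  shows "prod_list (map \<rho> (map \<sigma> [0..<k])) * \<delta> \<le> dist (address \<phi> \<sigma>) (address \<phi> \<omega>)"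
proof -
  let ?u = "map \<sigma> [0..<k]"
  have split: "address \<phi> \<tau> = word_comp \<phi> (map \<tau> [0..<k]) (\<phi> (\<tau> k) (address \<phi> (\<lambda>j. \<tau> (j + Suc k))))"
    if "\<tau> \<in> code_space N" for \<tau>
    using address_shift[OF that, of "Suc k"] by (simp add: word_comp_append)
  have "dist (address \<phi> \<sigma>) (address \<phi> \<omega>) = prod_list (map \<rho> ?u) *
      dist (\<phi> (\<sigma> k) (address \<phi> (\<lambda>j. \<sigma> (j + Suc k)))) (\<phi> (\<omega> k) (address \<phi> (\<lambda>j. \<omega> (j + Suc k))))"
    unfolding split[OF \<sigma>] split[OF \<omega>] assms(3)[symmetric]
    by (rule dist_word_comp_ratio[OF code_space_prefix[OF \<sigma>]])
  moreover have "\<delta> \<le> dist (\<phi> (\<sigma> k) (address \<phi> (\<lambda>j. \<sigma> (j + Suc k)))) (\<phi> (\<omega> k) (address \<phi> (\<lambda>j. \<omega> (j + Suc k))))"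
    using assms(4) \<sigma> \<omega> by (intro separation address_in_A code_space_shift) (auto simp: code_space_def)
  moreover have "0 \<le> prod_list (map \<rho> ?u)"
    using ratio_prod_pos[OF code_space_prefix[OF \<sigma>]] by (rule less_imp_le)
  ultimately show ?thesis by (simp add: mult_left_mono)
qed

lemma diam_pow_ge_branching:
  assumes s: "0 < s" and \<sigma>: "\<sigma> \<in> code_space N" "address \<phi> \<sigma> \<in> E"
    and \<omega>: "\<omega> \<in> code_space N" "address \<phi> \<omega> \<in> E"
    and "map \<sigma> [0..<k] = map \<omega> [0..<k]" "\<sigma> k \<noteq> \<omega> k"
  shows "ennreal (\<delta> powr s * prod_list (map (\<lambda>i. \<rho> i powr s) (map \<sigma> [0..<k]))) \<le> diam_pow dist s E"
proof -
  let ?u = "map \<sigma> [0..<k]"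
  have u: "set ?u \<subseteq> {1..N}" by (rule code_space_prefix[OF \<sigma>(1)])
  have "ennreal ((prod_list (map \<rho> ?u) * \<delta>) powr s) \<le> diam_pow dist s E"
    using dist_branching_addresses[OF \<sigma>(1) \<omega>(1) assms(6,7)] \<delta>_pos ratio_prod_pos[OF u] \<sigma>(2) \<omega>(2)
    by (intro diam_pow_ge[OF s]) auto
  also have "(prod_list (map \<rho> ?u) * \<delta>) powr s = \<delta> powr s * prod_list (map (\<lambda>i. \<rho> i powr s) ?u)"
    using \<delta>_pos ratio_prod_pos[OF u] ratio_prod_powr[OF u] by (simp add: powr_mult)
  finally show ?thesis .
qed

text \<open>Every set meeting the attractor is either pinned down by a long common prefix of all
  addresses it contains, or contains two addresses that branch apart and is therefore large.\<close>

lemma common_prefix_of_set: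
  assumes s: "0 < s" and e: "0 < e" and hit: "\<exists>\<sigma>\<in>code_space N. address \<phi> \<sigma> \<in> E"
  obtains u where "set u \<subseteq> {1..N}"
    and "\<And>\<sigma>. \<sigma> \<in> code_space N \<Longrightarrow> address \<phi> \<sigma> \<in> E \<Longrightarrow> map \<sigma> [0..<length u] = u"
    and "ennreal (\<delta> powr s * prod_list (map (\<lambda>i. \<rho> i powr s) u)) \<le> diam_pow dist s E + ennreal e"
proof -
  obtain \<sigma>0 where \<sigma>0: "\<sigma>0 \<in> code_space N" "address \<phi> \<sigma>0 \<in> E" using hit by blast
  let ?D = "\<lambda>k. \<exists>\<sigma>\<in>code_space N. address \<phi> \<sigma> \<in> E \<and> \<sigma> k \<noteq> \<sigma>0 k"
  let ?w = "\<lambda>u. prod_list (map (\<lambda>i. \<rho> i powr s) u)"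
  show ?thesis
  proof (cases "\<exists>k. ?D k")
    case True
    define j where "j = (LEAST k. ?D k)"
    obtain \<sigma>1 where \<sigma>1: "\<sigma>1 \<in> code_space N" "address \<phi> \<sigma>1 \<in> E" "\<sigma>1 j \<noteq> \<sigma>0 j"
      using LeastI_ex[OF True] unfolding j_def by blast
    have below: "\<sigma> i = \<sigma>0 i" if "i < j" "\<sigma> \<in> code_space N" "address \<phi> \<sigma> \<in> E" for i \<sigma>
      using not_less_Least[of i ?D] that unfolding j_def by blast
    then have prefix: "map \<sigma> [0..<j] = map \<sigma>0 [0..<j]" if "\<sigma> \<in> code_space N" "address \<phi> \<sigma> \<in> E" for \<sigma>
      using that by simp
    show ?thesis
    proof (rule that)
      show "set (map \<sigma>0 [0..<j]) \<subseteq> {1..N}" by (rule code_space_prefix[OF \<sigma>0(1)])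
      show "map \<sigma> [0..<length (map \<sigma>0 [0..<j])] = map \<sigma>0 [0..<j]"
        if "\<sigma> \<in> code_space N" "address \<phi> \<sigma> \<in> E" for \<sigma>
        using prefix[OF that] by simp
      show "ennreal (\<delta> powr s * ?w (map \<sigma>0 [0..<j])) \<le> diam_pow dist s E + ennreal e"
        using diam_pow_ge_branching[OF s \<sigma>0 \<sigma>1(1,2) prefix[OF \<sigma>1(1,2), symmetric] not_sym[OF \<sigma>1(3)]]
        by (rule add_increasing2[OF zero_le])
    qed
  next
    case False
    have "(\<lambda>k. \<delta> powr s * (max_ratio powr s) ^ k) \<longlonglongrightarrow> \<delta> powr s * 0"
      using max_ratio_powr_less_1[OF s] by (intro tendsto_mult tendsto_const LIMSEQ_power_zero) simp_all
    from order_tendstoD(2)[OF this] e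
    have "eventually (\<lambda>k. \<delta> powr s * (max_ratio powr s) ^ k < e) sequentially" by simp
    then obtain k where k: "\<delta> powr s * (max_ratio powr s) ^ k < e"
      using eventually_happens'[OF sequentially_bot] by blast
    show ?thesis
    proof (rule that)
      show "set (map \<sigma>0 [0..<k]) \<subseteq> {1..N}" by (rule code_space_prefix[OF \<sigma>0(1)])
      show "map \<sigma> [0..<length (map \<sigma>0 [0..<k])] = map \<sigma>0 [0..<k]"
        if "\<sigma> \<in> code_space N" "address \<phi> \<sigma> \<in> E" for \<sigma>
        using False that by auto
      have "\<delta> powr s * ?w (map \<sigma>0 [0..<k]) \<le> \<delta> powr s * (max_ratio powr s) ^ k"
        using weight_le_power[OF _ code_space_prefix[OF \<sigma>0(1)], of s] s by (intro mult_left_mono) simp_all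
      then show "ennreal (\<delta> powr s * ?w (map \<sigma>0 [0..<k])) \<le> diam_pow dist s E + ennreal e"
        using k by (intro add_increasing[OF zero_le] ennreal_leI) linarith
    qed
  qed
qed

lemma cover_prefixes:
  assumes s: "0 < s"
  shows "\<exists>u. \<forall>n. (\<exists>\<sigma>\<in>code_space N. address \<phi> \<sigma> \<in> C n) \<longrightarrow> set (u n) \<subseteq> {1..N} \<and>
      (\<forall>\<sigma>\<in>code_space N. address \<phi> \<sigma> \<in> C n \<longrightarrow> map \<sigma> [0..<length (u n)] = u n) \<and>
      ennreal (\<delta> powr s * prod_list (map (\<lambda>i. \<rho> i powr s) (u n)))
        \<le> diam_pow dist s (C n) + ennreal (\<delta> powr s * (1/2) ^ Suc (Suc n))"
proof -
  have "\<exists>u. (\<exists>\<sigma>\<in>code_space N. address \<phi> \<sigma> \<in> C n) \<longrightarrow> set u \<subseteq> {1..N} \<and>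
      (\<forall>\<sigma>\<in>code_space N. address \<phi> \<sigma> \<in> C n \<longrightarrow> map \<sigma> [0..<length u] = u) \<and>
      ennreal (\<delta> powr s * prod_list (map (\<lambda>i. \<rho> i powr s) u))
        \<le> diam_pow dist s (C n) + ennreal (\<delta> powr s * (1/2) ^ Suc (Suc n))" for n
  proof (cases "\<exists>\<sigma>\<in>code_space N. address \<phi> \<sigma> \<in> C n")
    case True
    have "0 < \<delta> powr s * (1/2) ^ Suc (Suc n)" using \<delta>_pos by simp
    then obtain u where "set u \<subseteq> {1..N}"
      "\<And>\<sigma>. \<sigma> \<in> code_space N \<Longrightarrow> address \<phi> \<sigma> \<in> C n \<Longrightarrow> map \<sigma> [0..<length u] = u"
      "ennreal (\<delta> powr s * prod_list (map (\<lambda>i. \<rho> i powr s) u))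
        \<le> diam_pow dist s (C n) + ennreal (\<delta> powr s * (1/2) ^ Suc (Suc n))"
      using common_prefix_of_set[OF s _ True] by blast
    then show ?thesis by blast
  qed simp
  then show ?thesis by (rule choice[OF allI])
qed

lemma cover_sum_diam_pow_ge:
  assumes s: "0 < s" and sum_ge: "1 \<le> (\<Sum>i\<in>{1..N}. \<rho> i powr s)" and cover: "A \<subseteq> (\<Union>n. C n)"
  shows "ennreal (\<delta> powr s / 2) \<le> (\<Sum>n. diam_pow dist s (C n))"
proof -
  define w where "w i = \<rho> i powr s" for i
  define hit where "hit n = (\<exists>\<sigma>\<in>code_space N. address \<phi> \<sigma> \<in> C n)" for n
  \<comment> \<open>The slack allowed for the \<open>n\<close>-th piece; the slacks add up to \<open>\<delta>\<^sup>s/2\<close>.\<close>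
  define e where "e n = \<delta> powr s * (1/2) ^ Suc (Suc n)" for n
  obtain u where u: "\<And>n. hit n \<Longrightarrow> set (u n) \<subseteq> {1..N} \<and>
      (\<forall>\<sigma>\<in>code_space N. address \<phi> \<sigma> \<in> C n \<longrightarrow> map \<sigma> [0..<length (u n)] = u n) \<and>
      ennreal (\<delta> powr s * prod_list (map w (u n))) \<le> diam_pow dist s (C n) + ennreal (e n)"
    using cover_prefixes[OF s, of C] unfolding hit_def w_def e_def by blast
  have weight: "1 \<le> (\<Sum>n. if hit n then ennreal (prod_list (map w (u n))) else 0)"
  proof (rule cylinder_cover_weight_ge_1)
    show "0 \<le> w i" for i by (simp add: w_def)
    show "1 \<le> sum w {1..N}" using sum_ge by (simp add: w_def)
    fix \<xi> :: "nat \<Rightarrow> nat" assume "\<forall>k. \<xi> k \<in> {1..N}"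
    then have \<xi>: "\<xi> \<in> code_space N" by (simp add: code_space_def)
    then obtain n where "address \<phi> \<xi> \<in> C n" using address_in_A cover by blast
    then show "\<exists>n. hit n \<and> map \<xi> [0..<length (u n)] = u n" using u \<xi> unfolding hit_def by blast
  qed
  define D where "D = ennreal (\<delta> powr s)"
  have "D = D * 1" by simp
  also have "\<dots> \<le> D * (\<Sum>n. if hit n then ennreal (prod_list (map w (u n))) else 0)"
    by (rule mult_left_mono[OF weight]) simp
  also have "\<dots> = (\<Sum>n. D * (if hit n then ennreal (prod_list (map w (u n))) else 0))"
    by (rule ennreal_suminf_cmult[symmetric])
  also have "\<dots> \<le> (\<Sum>n. diam_pow dist s (C n) + ennreal (e n))"
  proof (rule suminf_le)
    fix n
    have "0 \<le> prod_list (map w (u n))" by (intro prod_list_nonneg) (auto simp: w_def)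
    then show "D * (if hit n then ennreal (prod_list (map w (u n))) else 0) \<le> diam_pow dist s (C n) + ennreal (e n)"
      using u[of n] by (simp add: D_def ennreal_mult)
  qed simp_all
  also have "\<dots> = (\<Sum>n. diam_pow dist s (C n)) + (\<Sum>n. ennreal (e n))"
    by (rule suminf_add[symmetric]) simp_all
  also have "(\<Sum>n. ennreal (e n)) = ennreal (\<delta> powr s / 2)"
    unfolding e_def by (rule suminf_ennreal_halves) simp
  finally have "ennreal (\<delta> powr s / 2) + ennreal (\<delta> powr s / 2)
      \<le> ennreal (\<delta> powr s / 2) + (\<Sum>n. diam_pow dist s (C n))"
    by (simp add: D_def add.commute flip: ennreal_plus)
  then show ?thesis by (simp add: ennreal_add_left_cancel_le)
qed

end

section \<open>The strong open set condition\<close>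

lemma compact_family_separated:
  fixes S :: "'i \<Rightarrow> 'a::metric_space set"
  assumes "finite I" "\<And>i. i \<in> I \<Longrightarrow> compact (S i)"
    and "\<And>i j. i \<in> I \<Longrightarrow> j \<in> I \<Longrightarrow> i \<noteq> j \<Longrightarrow> S i \<inter> S j = {}"
  obtains \<delta> where "0 < \<delta>"
    "\<And>i j x y. i \<in> I \<Longrightarrow> j \<in> I \<Longrightarrow> i \<noteq> j \<Longrightarrow> x \<in> S i \<Longrightarrow> y \<in> S j \<Longrightarrow> \<delta> \<le> dist x y"
proof -
  define pairs where "pairs = {(i, j). i \<in> I \<and> j \<in> I \<and> i \<noteq> j}"
  define P where "P = (\<Union>(i, j)\<in>pairs. S i \<times> S j)"
  have "finite pairs" using assms(1) by (auto simp: pairs_def intro: finite_subset[of _ "I \<times> I"])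
  then have "compact P" unfolding P_def using assms(2) by (intro compact_UN) (auto simp: pairs_def intro: compact_Times)
  have pos: "0 < dist (fst p) (snd p)" if "p \<in> P" for p
    using that assms(3) by (fastforce simp: P_def pairs_def)
  have in_P: "(x, y) \<in> P" if "i \<in> I" "j \<in> I" "i \<noteq> j" "x \<in> S i" "y \<in> S j" for i j x y
    using that by (auto simp: P_def pairs_def)
  show ?thesis
  proof (cases "P = {}")
    case True
    have False if "i \<in> I" "j \<in> I" "i \<noteq> j" "x \<in> S i" "y \<in> S j" for i j x y
      using in_P[OF that] True by blast
    then show ?thesis by (intro that[of 1]) auto
  next
    case False
    have "continuous_on P (\<lambda>p. dist (fst p) (snd p))" by (intro continuous_intros)
    then obtain p where p: "p \<in> P" "\<And>q. q \<in> P \<Longrightarrow> dist (fst p) (snd p) \<le> dist (fst q) (snd q)"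
      using continuous_attains_inf[OF \<open>compact P\<close> False] by blast
    show ?thesis
      by (rule that[of "dist (fst p) (snd p)"]) (use pos[OF p(1)] p(2)[OF in_P] in auto)
  qed
qed

context similarity_ifs
begin

lemma \<phi>_inj: "i \<in> {1..N} \<Longrightarrow> \<phi> i x = \<phi> i y \<Longrightarrow> x = y"
  using similarity[of i x y] ratio[of i] by simp

lemma word_comp_images_disjoint:
  assumes inv: "\<And>i. i \<in> {1..N} \<Longrightarrow> \<phi> i ` U \<subseteq> U"
    and disj: "\<And>i j. i \<in> {1..N} \<Longrightarrow> j \<in> {1..N} \<Longrightarrow> i \<noteq> j \<Longrightarrow> \<phi> i ` U \<inter> \<phi> j ` U = {}"
  shows "set u \<subseteq> {1..N} \<Longrightarrow> set v \<subseteq> {1..N} \<Longrightarrow> length u = length v \<Longrightarrow> u \<noteq> v \<Longrightarrow>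
    word_comp \<phi> u ` U \<inter> word_comp \<phi> v ` U = {}"
proof (induct u arbitrary: v)
  case (Cons i u)
  then obtain j v' where v: "v = j # v'" by (cases v) auto
  have ij: "i \<in> {1..N}" "j \<in> {1..N}" and uv: "set u \<subseteq> {1..N}" "set v' \<subseteq> {1..N}"
    using Cons.prems v by auto
  show ?case
  proof (cases "i = j")
    case False
    have "word_comp \<phi> (i # u) ` U \<subseteq> \<phi> i ` U"
      using word_comp_image_subset[of u "{1..N}" \<phi> U, OF uv(1) inv] by (auto simp: image_comp[symmetric])
    moreover have "word_comp \<phi> v ` U \<subseteq> \<phi> j ` U"
      using word_comp_image_subset[of v' "{1..N}" \<phi> U, OF uv(2) inv] v by (auto simp: image_comp[symmetric])
    ultimately show ?thesis using disj[OF ij False] by blast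
  next
    case True
    then have "u \<noteq> v'" "length u = length v'" using Cons.prems v by auto
    then have disjoint: "word_comp \<phi> u ` U \<inter> word_comp \<phi> v' ` U = {}"
      using Cons.hyps uv by blast
    show ?thesis
    proof (rule ccontr)
      assume "word_comp \<phi> (i # u) ` U \<inter> word_comp \<phi> v ` U \<noteq> {}"
      then obtain a b where "a \<in> U" "b \<in> U" "\<phi> i (word_comp \<phi> u a) = \<phi> j (word_comp \<phi> v' b)"
        using v by auto
      then show False using \<phi>_inj[OF ij(1)] True disjoint by blast
    qed
  qed
qed simp

lemma sosc_word_into_open:
  assumes "SOSC N \<phi>"
  obtains U \<tau> where "\<And>i. i \<in> {1..N} \<Longrightarrow> \<phi> i ` U \<subseteq> U"
    "\<And>i j. i \<in> {1..N} \<Longrightarrow> j \<in> {1..N} \<Longrightarrow> i \<noteq> j \<Longrightarrow> \<phi> i ` U \<inter> \<phi> j ` U = {}"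
    "set \<tau> \<subseteq> {1..N}" "word_comp \<phi> \<tau> ` K \<subseteq> U"
proof -
  from assms obtain U where U: "open U" "\<And>i. i \<in> {1..N} \<Longrightarrow> \<phi> i ` U \<subseteq> U"
    "\<And>i j. i \<in> {1..N} \<Longrightarrow> j \<in> {1..N} \<Longrightarrow> i \<noteq> j \<Longrightarrow> \<phi> i ` U \<inter> \<phi> j ` U = {}" "U \<inter> K \<noteq> {}"
    unfolding SOSC_def attractor_eq by metis
  from U(4) obtain x where "x \<in> U" "x \<in> K" by blast
  then obtain \<sigma>0 where \<sigma>0: "\<sigma>0 \<in> code_space N" "address \<phi> \<sigma>0 \<in> U"
    unfolding K_def by blast
  obtain e where e: "0 < e" "ball (address \<phi> \<sigma>0) e \<subseteq> U"
    using U(1) \<sigma>0(2) unfolding open_contains_ball by blast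
  obtain D where D: "\<forall>a\<in>K. \<forall>b\<in>K. dist a b \<le> D"
    using compact_imp_bounded[OF compact_K] unfolding bounded_two_points by blast
  obtain m where m: "max_ratio ^ m * D < e" using ex_power_L_less[OF e(1), of D] by blast
  define \<tau> where "\<tau> = map \<sigma>0 [0..<m]"
  show ?thesis
  proof (rule that[OF U(2,3)])
    show "set \<tau> \<subseteq> {1..N}" unfolding \<tau>_def by (rule code_space_prefix[OF \<sigma>0(1)])
    show "word_comp \<phi> \<tau> ` K \<subseteq> U"
    proof (rule image_subsetI)
      fix a assume "a \<in> K"
      define z where "z = address \<phi> (\<lambda>j. \<sigma>0 (j + m))"
      have "z \<in> K" unfolding z_def by (rule address_in_K[OF code_space_shift[OF \<sigma>0(1)]])
      have "dist (address \<phi> \<sigma>0) (word_comp \<phi> \<tau> a) \<le> max_ratio ^ m * dist z a"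
        using address_shift[OF \<sigma>0(1), of m] dist_word_comp_le_power[OF code_space_prefix[OF \<sigma>0(1)]]
        by (simp add: \<tau>_def z_def)
      also have "\<dots> \<le> max_ratio ^ m * D"
        using D \<open>z \<in> K\<close> \<open>a \<in> K\<close> max_ratio_pos by (simp add: mult_left_mono)
      finally have "dist (address \<phi> \<sigma>0) (word_comp \<phi> \<tau> a) < e" using m by linarith
      then show "word_comp \<phi> \<tau> a \<in> U" using e(2) by auto
    qed
  qed blast+
qed

lemma continuous_on_word_comp: "set u \<subseteq> {1..N} \<Longrightarrow> continuous_on S (word_comp \<phi> u)"
  using dist_word_comp_ratio ratio_prod_pos
  by (intro lipschitz_on_continuous_on[of "prod_list (map \<rho> u)"] lipschitz_onI) (auto simp: less_imp_le)

lemma sum_word_ratios_powr: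
  assumes "set \<tau> \<subseteq> {1..N}" "bij_betw e {1..M} {u. set u \<subseteq> {1..N} \<and> length u = n}"
  shows "(\<Sum>j\<in>{1..M}. prod_list (map \<rho> (e j @ \<tau>)) powr s)
    = prod_list (map \<rho> \<tau>) powr s * (\<Sum>i\<in>{1..N}. \<rho> i powr s) ^ n"
proof -
  have "(\<Sum>j\<in>{1..M}. prod_list (map \<rho> (e j @ \<tau>)) powr s)
      = (\<Sum>u | set u \<subseteq> {1..N} \<and> length u = n. prod_list (map \<rho> (u @ \<tau>)) powr s)"
    by (rule sum.reindex_bij_betw[OF assms(2)])
  also have "\<dots> = (\<Sum>u | set u \<subseteq> {1..N} \<and> length u = n.
      prod_list (map \<rho> \<tau>) powr s * prod_list (map (\<lambda>i. \<rho> i powr s) u))"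
    using assms(1) ratio_prod_pos by (intro sum.cong) (auto simp: powr_mult ratio_prod_powr)
  also have "\<dots> = prod_list (map \<rho> \<tau>) powr s * (\<Sum>i\<in>{1..N}. \<rho> i powr s) ^ n"
    by (simp add: sum_distrib_left[symmetric] sum_prod_list_words)
  finally show ?thesis .
qed

lemma separated_word_system:
  assumes inv: "\<And>i. i \<in> {1..N} \<Longrightarrow> \<phi> i ` U \<subseteq> U"
    and disj: "\<And>i j. i \<in> {1..N} \<Longrightarrow> j \<in> {1..N} \<Longrightarrow> i \<noteq> j \<Longrightarrow> \<phi> i ` U \<inter> \<phi> j ` U = {}"
    and \<tau>: "set \<tau> \<subseteq> {1..N}" "word_comp \<phi> \<tau> ` K \<subseteq> U"
    and n: "1 \<le> n" and e: "bij_betw e {1..M} {u. set u \<subseteq> {1..N} \<and> length u = n}"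
  obtains \<delta> where
    "separated_similarity_ifs M (\<lambda>j. word_comp \<phi> (e j @ \<tau>)) (\<lambda>j. prod_list (map \<rho> (e j @ \<tau>))) K \<delta>"
proof -
  define h where "h j = word_comp \<phi> (e j @ \<tau>)" for j
  have eW: "set (e j) \<subseteq> {1..N} \<and> length (e j) = n" if "j \<in> {1..M}" for j
    using bij_betw_apply[OF e that] by (simp only: mem_Collect_eq)
  have words: "set (e j @ \<tau>) \<subseteq> {1..N}" if "j \<in> {1..M}" for j using eW[OF that] \<tau>(1) by auto
  have "M = card {u. set u \<subseteq> {1..N} \<and> length u = n}" using bij_betw_same_card[OF e] by simp
  also have "\<dots> = N ^ n" using card_lists_length_eq[of "{1..N}" n] by simp
  finally have "1 \<le> M" using one_le_N by simp
  have sim: "similarity_ifs M h (\<lambda>j. prod_list (map \<rho> (e j @ \<tau>)))"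
  proof (unfold h_def, rule similarity_ifs_words[OF \<open>1 \<le> M\<close>])
    show "set (e j @ \<tau>) \<subseteq> {1..N} \<and> e j @ \<tau> \<noteq> []" if "j \<in> {1..M}" for j
      using words[OF that] eW[OF that] n by auto
  qed
  have compact: "compact (h j ` K)" if "j \<in> {1..M}" for j
    unfolding h_def using words[OF that] by (intro compact_continuous_image continuous_on_word_comp compact_K)
  have disjoint: "h i ` K \<inter> h j ` K = {}" if "i \<in> {1..M}" "j \<in> {1..M}" "i \<noteq> j" for i j
  proof -
    have "e i \<noteq> e j" using bij_betw_imp_inj_on[OF e] that unfolding inj_on_def by blast
    then have "word_comp \<phi> (e i) ` U \<inter> word_comp \<phi> (e j) ` U = {}"
      using word_comp_images_disjoint[OF inv disj] eW that by simp
    moreover have "h k ` K \<subseteq> word_comp \<phi> (e k) ` U" for k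
      using \<tau>(2) by (auto simp: h_def word_comp_append)
    ultimately show ?thesis by (metis Int_mono subset_empty)
  qed
  obtain \<delta> where "0 < \<delta>" and sep: "\<And>i j x y. i \<in> {1..M} \<Longrightarrow> j \<in> {1..M} \<Longrightarrow> i \<noteq> j \<Longrightarrow>
      x \<in> h i ` K \<Longrightarrow> y \<in> h j ` K \<Longrightarrow> \<delta> \<le> dist x y"
    using compact_family_separated[of "{1..M}" "\<lambda>j. h j ` K", OF finite_atLeastAtMost compact disjoint]
    by blast
  have "separated_similarity_ifs M h (\<lambda>j. prod_list (map \<rho> (e j @ \<tau>))) K \<delta>"
  proof (rule separated_similarity_ifs.intro[OF sim], unfold_locales)
    show "closed K" by (rule compact_imp_closed[OF compact_K])
    show "K \<noteq> {}" by (rule K_nonempty)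
    show "0 < \<delta>" by fact
    have "\<phi> i ` K \<subseteq> K" if "i \<in> {1..N}" for i using that K_invariant[THEN equalityD2] by blast
    then show "h j ` K \<subseteq> K" if "j \<in> {1..M}" for j
      unfolding h_def by (rule word_comp_image_subset[OF words[OF that]])
    show "\<delta> \<le> dist (h i a) (h j b)" if "i \<in> {1..M}" "j \<in> {1..M}" "i \<noteq> j" "a \<in> K" "b \<in> K"
      for i j a b
      using that(4,5) by (intro sep[OF that(1-3)] imageI)
  qed
  then show ?thesis unfolding h_def by (rule that)
qed

lemma attractor_hausdorff_delta_lower_bound:
  assumes sosc: "SOSC N \<phi>" and s: "0 < s" and sum_greater_1: "1 < (\<Sum>i\<in>{1..N}. \<rho> i powr s)"
  obtains \<kappa> where "0 < \<kappa>" "\<And>\<delta>. \<kappa> \<le> hausdorff_delta dist s \<delta> K"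
proof -
  obtain U \<tau> where inv: "\<And>i. i \<in> {1..N} \<Longrightarrow> \<phi> i ` U \<subseteq> U"
    and disj: "\<And>i j. i \<in> {1..N} \<Longrightarrow> j \<in> {1..N} \<Longrightarrow> i \<noteq> j \<Longrightarrow> \<phi> i ` U \<inter> \<phi> j ` U = {}"
    and \<tau>: "set \<tau> \<subseteq> {1..N}" "word_comp \<phi> \<tau> ` K \<subseteq> U"
    using sosc_word_into_open[OF sosc] by blast
  define c\<tau> where "c\<tau> = prod_list (map \<rho> \<tau>) powr s"
  have "0 < c\<tau>" unfolding c\<tau>_def using ratio_prod_pos[OF \<tau>(1)] by simp
  obtain n0 where "1 / c\<tau> < (\<Sum>i\<in>{1..N}. \<rho> i powr s) ^ n0" using real_arch_pow[OF sum_greater_1] by blast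
  then have "1 / c\<tau> < (\<Sum>i\<in>{1..N}. \<rho> i powr s) ^ Suc n0"
    using power_increasing[of n0 "Suc n0" "\<Sum>i\<in>{1..N}. \<rho> i powr s"] sum_greater_1 by linarith
  then have big: "1 \<le> c\<tau> * (\<Sum>i\<in>{1..N}. \<rho> i powr s) ^ Suc n0"
    using \<open>0 < c\<tau>\<close> by (simp add: field_simps)
  define M where "M = card {u. set u \<subseteq> {1..N} \<and> length u = Suc n0}"
  obtain e where e: "bij_betw e {1..M} {u. set u \<subseteq> {1..N} \<and> length u = Suc n0}"
    using ex_bij_betw_nat_finite_1[OF finite_lists_length_eq[OF finite_atLeastAtMost]] unfolding M_def
    by blast
  obtain \<delta> where "separated_similarity_ifs M
      (\<lambda>j. word_comp \<phi> (e j @ \<tau>)) (\<lambda>j. prod_list (map \<rho> (e j @ \<tau>))) K \<delta>"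
    using separated_word_system[OF inv disj \<tau> _ e] by (metis le_add1 plus_1_eq_Suc)
  then interpret H: separated_similarity_ifs M
    "\<lambda>j. word_comp \<phi> (e j @ \<tau>)" "\<lambda>j. prod_list (map \<rho> (e j @ \<tau>))" K \<delta> .
  have "1 \<le> (\<Sum>j\<in>{1..M}. prod_list (map \<rho> (e j @ \<tau>)) powr s)"
    using big sum_word_ratios_powr[OF \<tau>(1) e] by (simp add: c\<tau>_def)
  then have "ennreal (\<delta> powr s / 2) \<le> hausdorff_delta dist s \<delta>' K" for \<delta>'
    unfolding hausdorff_delta_def using H.cover_sum_diam_pow_ge[OF s] by (intro INF_greatest) blast
  moreover have "0 < ennreal (\<delta> powr s / 2)" using H.\<delta>_pos by simp
  ultimately show ?thesis using that by blast
qed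

end

section \<open>The graph of the fractal transformation\<close>

lemma sum_powr_eq_1_imp_nonneg:
  fixes c :: "'i \<Rightarrow> real"
  assumes "finite I" "I \<noteq> {}" "\<And>i. i \<in> I \<Longrightarrow> 0 < c i \<and> c i < 1" "(\<Sum>i\<in>I. c i powr s) = 1"
  shows "0 \<le> s"
proof (rule ccontr)
  assume "\<not> 0 \<le> s"
  then have "(\<Sum>i\<in>I. c i powr 0) < 1" using sum_powr_strict_antimono[of I c s 0] assms by simp
  moreover have "(\<Sum>i\<in>I. c i powr 0) = card I" using assms(3) by (simp add: less_imp_neq[symmetric])
  ultimately show False using assms(1,2) by (simp add: card_gt_0_iff[symmetric])
qed

locale fractal_graph =
  fixes N :: nat and f :: "nat \<Rightarrow> 'a::complete_space \<Rightarrow> 'a" and g :: "nat \<Rightarrow> 'b::complete_space \<Rightarrow> 'b"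
    and c r :: "nat \<Rightarrow> real"
  assumes N: "N \<ge> 1"
    and c: "\<And>i. i \<in> {1..N} \<Longrightarrow> 0 < c i \<and> c i < 1"
    and r: "\<And>i. i \<in> {1..N} \<Longrightarrow> 0 < r i \<and> r i < 1"
    and f_sim: "\<And>i x x'. i \<in> {1..N} \<Longrightarrow> dist (f i x) (f i x') = c i * dist x x'"
    and g_con: "\<And>i y y'. i \<in> {1..N} \<Longrightarrow> dist (g i y) (g i y') \<le> r i * dist y y'"
    and rc: "\<And>i. i \<in> {1..N} \<Longrightarrow> r i \<le> c i"
begin

sublocale F: similarity_ifs N f c
  using N c f_sim by unfold_locales auto

sublocale G: contractive_ifs N g "Max (r ` {1..N})"
proof
  have r_le: "r i \<le> Max (r ` {1..N})" if "i \<in> {1..N}" for i using that by (intro Max_ge) auto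
  have "Max (r ` {1..N}) \<in> r ` {1..N}" using N by (intro Max_in) auto
  then show "0 \<le> Max (r ` {1..N})" "Max (r ` {1..N}) < 1" using r by (auto simp: less_imp_le)
  show "dist (g i x) (g i y) \<le> Max (r ` {1..N}) * dist x y" if "i \<in> {1..N}" for i x y
    using g_con[OF that, of x y] mult_right_mono[OF r_le[OF that] zero_le_dist[of x y]] by linarith
qed (rule N)

lemma graph_FT_eq: "graph_FT N f g = {(x, address g (tops N f x)) |x. x \<in> F.K}"
  by (simp add: graph_FT_def fractal_transformation_def F.attractor_eq)

lemma fst_graph_FT: "fst ` graph_FT N f g = F.K"
  unfolding graph_FT_eq by force

lemma graph_FT_subset_cells:
  "graph_FT N f g \<subseteq> (\<Union>u\<in>{u. set u \<subseteq> {1..N} \<and> length u = k}. word_comp f u ` F.K \<times> word_comp g u ` G.K)"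
proof
  fix p assume "p \<in> graph_FT N f g"
  then obtain x where x: "x \<in> F.K" "p = (x, address g (tops N f x))" unfolding graph_FT_eq by blast
  define \<sigma> where "\<sigma> = tops N f x"
  have \<sigma>: "\<sigma> \<in> code_space N" "address f \<sigma> = x" using F.tops_address[OF x(1)] by (simp_all add: \<sigma>_def)
  have "x \<in> word_comp f (map \<sigma> [0..<k]) ` F.K"
    using F.address_shift[OF \<sigma>(1), of k] \<sigma>(2) F.address_in_K[OF code_space_shift[OF \<sigma>(1)]] by force
  moreover have "address g \<sigma> \<in> word_comp g (map \<sigma> [0..<k]) ` G.K"
    using G.address_shift[OF \<sigma>(1), of k] G.address_in_K[OF code_space_shift[OF \<sigma>(1)]] by force
  ultimately have "p \<in> word_comp f (map \<sigma> [0..<k]) ` F.K \<times> word_comp g (map \<sigma> [0..<k]) ` G.K"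
    using x(2) by (simp add: \<sigma>_def)
  moreover have "map \<sigma> [0..<k] \<in> {u. set u \<subseteq> {1..N} \<and> length u = k}"
    using code_space_prefix[OF \<sigma>(1)] by simp
  ultimately show "p \<in> (\<Union>u\<in>{u. set u \<subseteq> {1..N} \<and> length u = k}. word_comp f u ` F.K \<times> word_comp g u ` G.K)"
    by blast
qed

lemma diam_cell_le:
  assumes u: "set u \<subseteq> {1..N}" and "0 \<le> D"
    and DF: "\<And>a b. a \<in> F.K \<Longrightarrow> b \<in> F.K \<Longrightarrow> dist a b \<le> D"
    and DG: "\<And>a b. a \<in> G.K \<Longrightarrow> b \<in> G.K \<Longrightarrow> dist a b \<le> D"
  shows "diam_wrt max_dist (word_comp f u ` F.K \<times> word_comp g u ` G.K) \<le> ennreal (prod_list (map c u) * D)"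
proof (rule diam_wrt_le, safe)
  fix a b a' b' assume ab: "a \<in> F.K" "b \<in> G.K" "a' \<in> F.K" "b' \<in> G.K"
  have cu: "0 \<le> prod_list (map c u)" using F.ratio_prod_pos[OF u] by simp
  have "dist (word_comp f u a) (word_comp f u a') \<le> prod_list (map c u) * D"
    using F.dist_word_comp_ratio[OF u] DF[OF ab(1,3)] cu by (simp add: mult_left_mono)
  moreover have "dist (word_comp g u b) (word_comp g u b') \<le> prod_list (map c u) * D"
  proof -
    have "dist (word_comp g u b) (word_comp g u b') \<le> prod_list (map r u) * dist b b'"
      using u g_con r by (intro dist_word_comp_le) (auto simp: less_imp_le)
    also have "\<dots> \<le> prod_list (map c u) * D"
      using u r rc DG[OF ab(2,4)] cu by (intro mult_mono prod_list_map_mono) (auto simp: less_imp_le)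
    finally show ?thesis .
  qed
  ultimately show "max_dist (word_comp f u a, word_comp g u b) (word_comp f u a', word_comp g u b')
      \<le> prod_list (map c u) * D"
    by (simp add: max_dist_def)
qed

lemma attractors_bounded:
  obtains D where "0 < D" "\<And>a b. a \<in> F.K \<Longrightarrow> b \<in> F.K \<Longrightarrow> dist a b \<le> D"
    "\<And>a b. a \<in> G.K \<Longrightarrow> b \<in> G.K \<Longrightarrow> dist a b \<le> D"
proof -
  obtain D1 where D1: "\<forall>a\<in>F.K. \<forall>b\<in>F.K. dist a b \<le> D1"
    using compact_imp_bounded[OF F.compact_K] unfolding bounded_two_points by blast
  obtain D2 where D2: "\<forall>a\<in>G.K. \<forall>b\<in>G.K. dist a b \<le> D2"
    using compact_imp_bounded[OF G.compact_K] unfolding bounded_two_points by blast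
  show ?thesis
  proof (rule that[of "max 1 (max D1 D2)"])
    show "dist a b \<le> max 1 (max D1 D2)" if "a \<in> F.K" "b \<in> F.K" for a b
      using D1 that by (meson max.cobounded1 max.coboundedI2 order_trans)
    show "dist a b \<le> max 1 (max D1 D2)" if "a \<in> G.K" "b \<in> G.K" for a b
      using D2 that by (meson max.cobounded2 max.coboundedI2 order_trans)
  qed simp
qed

lemma hausdorff_delta_graph_FT_le:
  assumes s: "0 < s" and D: "0 < D" "\<And>a b. a \<in> F.K \<Longrightarrow> b \<in> F.K \<Longrightarrow> dist a b \<le> D"
    "\<And>a b. a \<in> G.K \<Longrightarrow> b \<in> G.K \<Longrightarrow> dist a b \<le> D"
    and k: "F.max_ratio ^ k * D \<le> \<delta>"
  shows "hausdorff_delta max_dist s \<delta> (graph_FT N f g) \<le> ennreal (D powr s * (\<Sum>i\<in>{1..N}. c i powr s) ^ k)"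
proof -
  define W where "W = {u. set u \<subseteq> {1..N} \<and> length u = k}"
  define cell where "cell u = word_comp f u ` F.K \<times> word_comp g u ` G.K" for u
  have diam: "diam_wrt max_dist (cell u) \<le> ennreal (prod_list (map c u) * D)" if "u \<in> W" for u
    unfolding cell_def using that D by (intro diam_cell_le) (auto simp: W_def less_imp_le)
  have small: "prod_list (map c u) * D \<le> \<delta>" if "u \<in> W" for u
    using mult_right_mono[OF F.ratio_prod_le_power[of u] less_imp_le[OF D(1)]] that k
    by (simp add: W_def)
  have "finite W" by (simp add: W_def finite_lists_length_eq)
  moreover have "graph_FT N f g \<subseteq> (\<Union>u\<in>W. cell u)"
    unfolding W_def cell_def by (rule graph_FT_subset_cells)
  moreover have "diam_wrt max_dist (cell u) \<le> ennreal \<delta>" if "u \<in> W" for u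
    using diam[OF that] ennreal_leI[OF small[OF that]] by (rule order_trans)
  ultimately have "hausdorff_delta max_dist s \<delta> (graph_FT N f g) \<le> (\<Sum>u\<in>W. diam_pow max_dist s (cell u))"
    by (rule hausdorff_delta_le_finite_cover)
  also have "\<dots> \<le> (\<Sum>u\<in>W. ennreal ((prod_list (map c u) * D) powr s))"
    using diam F.ratio_prod_pos D(1) by (intro sum_mono diam_pow_le[OF s]) (auto simp: W_def less_imp_le)
  also have "\<dots> = ennreal (\<Sum>u\<in>W. (prod_list (map c u) * D) powr s)" by (rule sum_ennreal) simp
  also have "(\<Sum>u\<in>W. (prod_list (map c u) * D) powr s) = (\<Sum>u\<in>W. D powr s * prod_list (map (\<lambda>i. c i powr s) u))"
  proof (rule sum.cong[OF refl])
    fix u assume "u \<in> W"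
    then have u: "set u \<subseteq> {1..N}" by (simp add: W_def)
    have "(prod_list (map c u) * D) powr s = prod_list (map c u) powr s * D powr s"
      using F.ratio_prod_pos[OF u] D(1) by (simp add: powr_mult)
    then show "(prod_list (map c u) * D) powr s = D powr s * prod_list (map (\<lambda>i. c i powr s) u)"
      by (simp only: F.ratio_prod_powr[OF u] mult.commute)
  qed
  also have "\<dots> = ennreal (D powr s * (\<Sum>i\<in>{1..N}. c i powr s) ^ k)"
    by (simp add: W_def sum_distrib_left[symmetric] sum_prod_list_words)
  finally show ?thesis .
qed

lemma hausdorff_outer_graph_FT_eq_0:
  assumes s: "0 < s" and sum_less_1: "(\<Sum>i\<in>{1..N}. c i powr s) < 1"
  shows "hausdorff_outer max_dist s (graph_FT N f g) = 0"
proof (rule hausdorff_outer_eq_0I)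
  fix \<delta> \<epsilon> :: real assume "0 < \<delta>" "0 < \<epsilon>"
  define Q where "Q = (\<Sum>i\<in>{1..N}. c i powr s)"
  obtain D where D: "0 < D" "\<And>a b. a \<in> F.K \<Longrightarrow> b \<in> F.K \<Longrightarrow> dist a b \<le> D"
    "\<And>a b. a \<in> G.K \<Longrightarrow> b \<in> G.K \<Longrightarrow> dist a b \<le> D"
    using attractors_bounded by blast
  have "(\<lambda>k. D powr s * Q ^ k) \<longlonglongrightarrow> D powr s * 0"
    using sum_less_1 by (intro tendsto_mult tendsto_const LIMSEQ_power_zero) (simp_all add: Q_def sum_nonneg)
  then have "eventually (\<lambda>k. D powr s * Q ^ k < \<epsilon>) sequentially"
    using order_tendstoD(2) \<open>0 < \<epsilon>\<close> by fastforce
  with order_tendstoD(2)[OF F.LIMSEQ_power_L \<open>0 < \<delta>\<close>]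
  have "eventually (\<lambda>k. F.max_ratio ^ k * D < \<delta> \<and> D powr s * Q ^ k < \<epsilon>) sequentially"
    by (rule eventually_conj)
  then obtain k where k: "F.max_ratio ^ k * D < \<delta>" "D powr s * Q ^ k < \<epsilon>"
    using eventually_happens'[OF sequentially_bot] by blast
  have "hausdorff_delta max_dist s \<delta> (graph_FT N f g) \<le> ennreal (D powr s * Q ^ k)"
    using hausdorff_delta_graph_FT_le[OF s D less_imp_le[OF k(1)]] by (simp add: Q_def)
  also have "\<dots> \<le> ennreal \<epsilon>" using k(2) by (intro ennreal_leI) simp
  finally show "hausdorff_delta max_dist s \<delta> (graph_FT N f g) \<le> ennreal \<epsilon>" .
qed

lemma hausdorff_outer_graph_FT_pos:
  assumes sosc: "SOSC N f" and s: "0 < s" and sum_greater_1: "1 < (\<Sum>i\<in>{1..N}. c i powr s)"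
  shows "hausdorff_outer max_dist s (graph_FT N f g) \<noteq> 0"
proof -
  obtain \<kappa> where "0 < \<kappa>" "\<And>\<delta>. \<kappa> \<le> hausdorff_delta dist s \<delta> F.K"
    using F.attractor_hausdorff_delta_lower_bound[OF sosc s sum_greater_1] by blast
  then have "\<kappa> \<le> hausdorff_delta dist s 1 (fst ` graph_FT N f g)" by (simp add: fst_graph_FT)
  also have "\<dots> \<le> hausdorff_delta max_dist s 1 (graph_FT N f g)" by (rule hausdorff_delta_fst_le[OF s])
  also have "\<dots> \<le> hausdorff_outer max_dist s (graph_FT N f g)" by (rule hausdorff_outer_ge) simp
  finally show ?thesis using \<open>0 < \<kappa>\<close> by auto
qed

end

theorem proposition3p9:
  fixes N :: nat
    and f :: "nat \<Rightarrow> 'a::complete_space \<Rightarrow> 'a"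
    and g :: "nat \<Rightarrow> 'b::complete_space \<Rightarrow> 'b"
    and c r :: "nat \<Rightarrow> real"
    and s0 :: real
  assumes N: "N \<ge> 1"
    and c: "\<And>i. i \<in> {1..N} \<Longrightarrow> 0 < c i \<and> c i < 1"
    and r: "\<And>i. i \<in> {1..N} \<Longrightarrow> 0 < r i \<and> r i < 1"
    and f_sim: "\<And>i x x'. i \<in> {1..N} \<Longrightarrow> dist (f i x) (f i x') = c i * dist x x'"
    and g_con: "\<And>i y y'. i \<in> {1..N} \<Longrightarrow> dist (g i y) (g i y') \<le> r i * dist y y'"
    and rc: "\<And>i. i \<in> {1..N} \<Longrightarrow> r i \<le> c i"
    and sosc: "SOSC N f"
    and s0: "(\<Sum>i=1..N. c i powr s0) = 1"
  shows "hausdorff_dim max_dist (graph_FT N f g) = ereal s0"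
proof -
  interpret fractal_graph N f g c r
    using N c r f_sim g_con rc by unfold_locales
  have I: "finite {1..N}" "{1..N} \<noteq> {}" using N by auto
  have antimono: "(\<Sum>i\<in>{1..N}. c i powr t) < (\<Sum>i\<in>{1..N}. c i powr s)" if "s < t" for s t
    using sum_powr_strict_antimono[OF I c that] .
  have "0 \<le> s0" using sum_powr_eq_1_imp_nonneg[OF I c] s0 by simp
  show ?thesis
  proof (rule hausdorff_dim_eqI[OF \<open>0 \<le> s0\<close>])
    show "hausdorff_outer max_dist s (graph_FT N f g) = 0" if "s0 < s" for s
      using \<open>0 \<le> s0\<close> that antimono[OF that] s0 by (intro hausdorff_outer_graph_FT_eq_0) simp_all
    show "hausdorff_outer max_dist s (graph_FT N f g) \<noteq> 0" if "0 \<le> s" "s < s0" for s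
    proof (cases "s = 0")
      case True
      have "graph_FT N f g \<noteq> {}" using fst_graph_FT F.K_nonempty by auto
      then show ?thesis using hausdorff_outer_0_nonempty True by simp
    next
      case False
      then show ?thesis
        using that antimono[OF that(2)] s0 by (intro hausdorff_outer_graph_FT_pos[OF sosc]) simp_all
    qed
  qed
qed

end
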